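(* Let $A$ and $B$ be locally constant (unoriented) algebraic conformal nets, identified with commutative algebras over a field $\mathbf{K}$. Then locally constant algebraic defects between $A$ and $B$ are the same as pairs $(D,\varphi)$ where $D$ is an associative $\mathbf{K}$-algebra and $\varphi\colon A\otimes B\to Z(D)$ is an algebra homomorphism from $A\otimes B$ to the center of $D$.
   Context: Fix a field $\mathbf{K}$; all algebras are associative $\mathbf{K}$-algebras. Let $\mathsf{INT}$ be the category of compact connected oriented submanifolds (intervals) of $\mathbf{R}$ with orientation-preserving embeddings. An algebraic conformal net is a functor $\mathcal{A}\colon\mathsf{INT}\to\mathsf{Algebra}$ with $\mathcal{A}(\overline I)=\mathcal{A}(I)^{\mathrm{op}}$, satisfying isotony (images of embeddings are injective), locality (images of algebras of subintervals with disjoint interiors commute in the algebra of the ambient interval) and strong additivity (if $K=I\cup J$ then $\mathcal{A}(K)$ is generated by the images of $\mathcal{A}(I)$ and $\mathcal{A}(J)$). It is locally constant if it sends every positively-oriented interval to the same algebra $A$ and every embedding between positively-oriented intervals to $\mathrm{id}_A$; by locality $A$ is then commutative, and it is called unoriented if all morphisms are sent to $\mathrm{id}_A$. Let $\mathcal{S}^1$ be the unit circle, colored white on its left open half, black on its right open half, with special points $i$ and $-i$. Bicolored circle intervals are compact connected oriented submanifolds of $\mathcal{S}^1$ not containing $-i$ (and containing a neighborhood of $i$ if they contain $i$); they form a category $\mathsf{INT}_{\circ\bullet}$ with color-preserving orientation-preserving embeddings. Its subcategories of white intervals (contained in the left half), black intervals (contained in the right half) and genuinely bicolored intervals (containing $i$)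 are denoted $\mathsf{INT}_\circ$, $\mathsf{INT}_\bullet$, $\mathsf{INT}_{\circ\bullet}^{\mathrm{gen}}$. The maps $x\mapsto \exp(i\arctan x)$ and $x\mapsto -\exp(i\arctan x)$ identify $\mathbf{R}$ with the black and white halves, inducing functors $\Phi_\bullet,\Phi_\circ\colon\mathsf{INT}\to\mathsf{INT}_{\circ\bullet}$. An algebraic defect between conformal nets $\mathcal{A}$ and $\mathcal{B}$ is a functor $D\colon\mathsf{INT}_{\circ\bullet}\to\mathsf{Algebra}$ with $D(\overline I)=D(I)^{\mathrm{op}}$ together with natural isomorphisms $\sigma_\circ\colon\mathcal{A}\Rightarrow D\circ\Phi_\circ$ and $\sigma_\bullet\colon\mathcal{B}\Rightarrow D\circ\Phi_\bullet$, satisfying isotony on embeddings of genuinely bicolored intervals, locality (images of $D(I)$, $D(J)$ for subintervals with disjoint interiors commute in $D(K)$) and strong additivity. A defect between locally constant nets $A$ and $B$ is locally constant if $D$ sends every orientation-preserving morphism within $\mathsf{INT}_\circ$, within $\mathsf{INT}_\bullet$, and within $\mathsf{INT}_{\circ\bullet}^{\mathrm{gen}}$ to an identity, is constant on morphisms from white intervals to genuinely bicolored intervals and on morphisms from black intervals to genuinely bicolored intervals, and $\sigma_\circ,\sigma_\bullet$ are identities. In the correspondence, $D$ is the value of the defect on genuinely bicolored intervals, and the maps $A\to D$, $B\to D$ induced by inclusions of white, resp. black, intervals into genuinely bicolored ones are the restrictions of $\varphi$ to $A\otimes 1$, resp. $1\otimes B$. *)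

theory Defs
  imports "HOL-Analysis.Analysis"
begin

record ('u, 'k) kalg =
  acar  :: "'u set"
  azero :: 'u
  aone  :: 'u
  aadd  :: "'u \<Rightarrow> 'u \<Rightarrow> 'u"
  amul  :: "'u \<Rightarrow> 'u \<Rightarrow> 'u"
  asmult :: "'k \<Rightarrow> 'u \<Rightarrow> 'u"

definition is_kalg :: "('u, 'k::field) kalg \<Rightarrow> bool" where
  "is_kalg A \<longleftrightarrow>
     azero A \<in> acar A \<and> aone A \<in> acar A \<and>
     (\<forall>x\<in>acar A. \<forall>y\<in>acar A. aadd A x y \<in> acar A \<and> amul A x y \<in> acar A) \<and>
     (\<forall>c. \<forall>x\<in>acar A. asmult A c x \<in> acar A) \<and>
     (\<forall>x\<in>acar A. \<forall>y\<in>acar A. \<forall>z\<in>acar A.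
        aadd A (aadd A x y) z = aadd A x (aadd A y z) \<and>
        amul A (amul A x y) z = amul A x (amul A y z) \<and>
        amul A x (aadd A y z) = aadd A (amul A x y) (amul A x z) \<and>
        amul A (aadd A x y) z = aadd A (amul A x z) (amul A y z)) \<and>
     (\<forall>x\<in>acar A. \<forall>y\<in>acar A. aadd A x y = aadd A y x) \<and>
     (\<forall>x\<in>acar A. aadd A (azero A) x = x) \<and>
     (\<forall>x\<in>acar A. \<exists>y\<in>acar A. aadd A x y = azero A) \<and>
     (\<forall>x\<in>acar A. amul A (aone A) x = x \<and> amul A x (aone A) = x) \<and>
     (\<forall>c d. \<forall>x\<in>acar A. \<forall>y\<in>acar A.
        asmult A c (aadd A x y) = aadd A (asmult A c x) (asmult A c y) \<and>
        asmult A (c + d) x = aadd A (asmult A c x) (asmult A d x) \<and>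
        asmult A (c * d) x = asmult A c (asmult A d x) \<and>
        asmult A c (amul A x y) = amul A (asmult A c x) y \<and>
        asmult A c (amul A x y) = amul A x (asmult A c y)) \<and>
     (\<forall>x\<in>acar A. asmult A 1 x = x)"

definition kalg_comm :: "('u, 'k) kalg \<Rightarrow> bool" where
  "kalg_comm A \<longleftrightarrow> (\<forall>x\<in>acar A. \<forall>y\<in>acar A. amul A x y = amul A y x)"

definition kalg_op :: "('u, 'k) kalg \<Rightarrow> ('u, 'k) kalg" where
  "kalg_op A = A\<lparr>amul := (\<lambda>x y. amul A y x)\<rparr>"

definition kalg_hom :: "('u, 'k) kalg \<Rightarrow> ('v, 'k) kalg \<Rightarrow> ('u \<Rightarrow> 'v) \<Rightarrow> bool" where
  "kalg_hom A C h \<longleftrightarrow>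
     (\<forall>x\<in>acar A. h x \<in> acar C) \<and>
     (\<forall>x\<in>acar A. \<forall>y\<in>acar A. h (aadd A x y) = aadd C (h x) (h y) \<and>
                              h (amul A x y) = amul C (h x) (h y)) \<and>
     (\<forall>c. \<forall>x\<in>acar A. h (asmult A c x) = asmult C c (h x)) \<and>
     h (aone A) = aone C"

definition kalg_center :: "('u, 'k) kalg \<Rightarrow> 'u set" where
  "kalg_center C = {z \<in> acar C. \<forall>x\<in>acar C. amul C z x = amul C x z}"

definition kalg_subalg :: "('u, 'k) kalg \<Rightarrow> 'u set \<Rightarrow> bool" where
  "kalg_subalg C S \<longleftrightarrow> S \<subseteq> acar C \<and> azero C \<in> S \<and> aone C \<in> S \<and>
     (\<forall>x\<in>S. \<forall>y\<in>S. aadd C x y \<in> S \<and> amul C x y \<in> S) \<and>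
     (\<forall>c. \<forall>x\<in>S. asmult C c x \<in> S)"

definition kalg_generates :: "('u, 'k) kalg \<Rightarrow> 'u set \<Rightarrow> bool" where
  "kalg_generates C X \<longleftrightarrow> (\<forall>S. kalg_subalg C S \<and> X \<subseteq> S \<longrightarrow> acar C \<subseteq> S)"

text \<open>An algebra homomorphism \<open>A \<otimes> B \<rightarrow> Z(C)\<close>, written out through the universal
  property of the tensor product: \<open>\<phi> a b\<close> is the value on \<open>a \<otimes> b\<close>; linear maps out of
  \<open>A \<otimes> B\<close> are exactly bilinear maps on \<open>A \<times> B\<close>, and multiplicativity/unitality is
  checked on pure tensors.\<close>
definition tensor_center_hom ::
    "('u, 'k) kalg \<Rightarrow> ('u, 'k) kalg \<Rightarrow> ('u, 'k) kalg \<Rightarrow> ('u \<Rightarrow> 'u \<Rightarrow> 'u) \<Rightarrow> bool" where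
  "tensor_center_hom A B C \<phi> \<longleftrightarrow>
     (\<forall>a\<in>acar A. \<forall>b\<in>acar B. \<phi> a b \<in> kalg_center C) \<and>
     (\<forall>a\<in>acar A. \<forall>a'\<in>acar A. \<forall>b\<in>acar B.
        \<phi> (aadd A a a') b = aadd C (\<phi> a b) (\<phi> a' b)) \<and>
     (\<forall>a\<in>acar A. \<forall>b\<in>acar B. \<forall>b'\<in>acar B.
        \<phi> a (aadd B b b') = aadd C (\<phi> a b) (\<phi> a b')) \<and>
     (\<forall>c. \<forall>a\<in>acar A. \<forall>b\<in>acar B.
        \<phi> (asmult A c a) b = asmult C c (\<phi> a b) \<and> \<phi> a (asmult B c b) = asmult C c (\<phi> a b)) \<and>
     (\<forall>a\<in>acar A. \<forall>a'\<in>acar A. \<forall>b\<in>acar B. \<forall>b'\<in>acar B.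
        \<phi> (amul A a a') (amul B b b') = amul C (\<phi> a b) (\<phi> a' b')) \<and>
     \<phi> (aone A) (aone B) = aone C"

text \<open>An oriented interval is a triple (lo, hi, o) standing for the compact interval
  [lo, hi] (lo < hi) with orientation o (True = orientation of increasing coordinate).
  Bicoloured circle intervals are described in the angle coordinate
  \<open>\<theta> \<in> (-pi/2, 3pi/2)\<close> of \<open>S\<^sup>1 - {-i}\<close>, \<open>\<theta> \<mapsto> exp(i\<theta>)\<close>; then i is \<open>\<theta> = pi/2\<close>,
  the black (right) half is \<open>\<theta> < pi/2\<close> and the white (left) half is \<open>\<theta> > pi/2\<close>.\<close>

type_synonym ointv = "real \<times> real \<times> bool"

definition lo :: "ointv \<Rightarrow> real" where "lo I = fst I"
definition hi :: "ointv \<Rightarrow> real" where "hi I = fst (snd I)"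
definition ori :: "ointv \<Rightarrow> bool" where "ori I = snd (snd I)"
definition iset :: "ointv \<Rightarrow> real set" where "iset I = {lo I .. hi I}"
definition iint :: "ointv \<Rightarrow> real set" where "iint I = {lo I <..< hi I}"
definition irev :: "ointv \<Rightarrow> ointv" where "irev I = (lo I, hi I, \<not> ori I)"

text \<open>Smooth (C-infinity) orientation-preserving embedding of I into J, represented by a
  function real => real (only its values on I matter); smoothness up to the boundary is
  expressed by extension to a smooth function on an open neighbourhood.\<close>
definition smooth_emb :: "ointv \<Rightarrow> ointv \<Rightarrow> (real \<Rightarrow> real) \<Rightarrow> bool" where
  "smooth_emb I J f \<longleftrightarrow>
     (\<exists>U g. open U \<and> iset I \<subseteq> U \<and>
        (\<forall>n. \<forall>x\<in>U. ((deriv ^^ n) g) differentiable (at x)) \<and>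
        (\<forall>x\<in>iset I. g x = f x) \<and>
        (\<forall>x\<in>iset I. if ori I = ori J then deriv g x > 0 else deriv g x < 0)) \<and>
     (\<forall>x\<in>iset I. f x \<in> iset J)"

definition int_obj :: "ointv \<Rightarrow> bool" where "int_obj I \<longleftrightarrow> lo I < hi I"
definition int_hom :: "ointv \<Rightarrow> ointv \<Rightarrow> (real \<Rightarrow> real) \<Rightarrow> bool" where
  "int_hom I J f \<longleftrightarrow> int_obj I \<and> int_obj J \<and> smooth_emb I J f"

datatype colour = White | Black | Special

definition colour_of :: "real \<Rightarrow> colour" where
  "colour_of t = (if t < pi/2 then Black else if t > pi/2 then White else Special)"

definition cb_obj :: "ointv \<Rightarrow> bool" where
  "cb_obj I \<longleftrightarrow> - (pi/2) < lo I \<and> lo I < hi I \<and> hi I < 3 * pi / 2 \<and>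
                lo I \<noteq> pi/2 \<and> hi I \<noteq> pi/2"

definition cb_hom :: "ointv \<Rightarrow> ointv \<Rightarrow> (real \<Rightarrow> real) \<Rightarrow> bool" where
  "cb_hom I J f \<longleftrightarrow> cb_obj I \<and> cb_obj J \<and> smooth_emb I J f \<and>
                     (\<forall>x\<in>iset I. colour_of (f x) = colour_of x)"

definition is_white :: "ointv \<Rightarrow> bool" where "is_white I \<longleftrightarrow> cb_obj I \<and> pi/2 < lo I"
definition is_black :: "ointv \<Rightarrow> bool" where "is_black I \<longleftrightarrow> cb_obj I \<and> hi I < pi/2"
definition is_gen :: "ointv \<Rightarrow> bool" where "is_gen I \<longleftrightarrow> cb_obj I \<and> lo I < pi/2 \<and> pi/2 < hi I"

definition cb_subint :: "ointv \<Rightarrow> ointv \<Rightarrow> bool" where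
  "cb_subint I K \<longleftrightarrow> cb_obj I \<and> cb_obj K \<and> ori I = ori K \<and> iset I \<subseteq> iset K"

text \<open>The functors Phi_white (x \<mapsto> -exp(i arctan x)) and Phi_black (x \<mapsto> exp(i arctan x)).\<close>
definition phiW_obj :: "ointv \<Rightarrow> ointv" where
  "phiW_obj I = (arctan (lo I) + pi, arctan (hi I) + pi, ori I)"
definition phiB_obj :: "ointv \<Rightarrow> ointv" where
  "phiB_obj I = (arctan (lo I), arctan (hi I), ori I)"
definition phiW_mor :: "(real \<Rightarrow> real) \<Rightarrow> real \<Rightarrow> real" where
  "phiW_mor f = (\<lambda>t. arctan (f (tan (t - pi))) + pi)"
definition phiB_mor :: "(real \<Rightarrow> real) \<Rightarrow> real \<Rightarrow> real" where
  "phiB_mor f = (\<lambda>t. arctan (f (tan t)))"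

text \<open>The locally constant unoriented algebraic conformal net given by a commutative
  algebra A: positive intervals go to A, negative ones to A^op, all morphisms to identities.\<close>
definition lc_net_obj :: "('u, 'k) kalg \<Rightarrow> ointv \<Rightarrow> ('u, 'k) kalg" where
  "lc_net_obj A I = (if ori I then A else kalg_op A)"

type_synonym ('u, 'k) defect_obj = "ointv \<Rightarrow> ('u, 'k) kalg"
type_synonym 'u defect_mor = "ointv \<Rightarrow> ointv \<Rightarrow> (real \<Rightarrow> real) \<Rightarrow> 'u \<Rightarrow> 'u"

definition is_identity_on :: "('u, 'k) kalg \<Rightarrow> ('u \<Rightarrow> 'u) \<Rightarrow> bool" where
  "is_identity_on C h \<longleftrightarrow> (\<forall>x\<in>acar C. h x = x)"

text \<open>Locally constant algebraic defect between the locally constant nets A and B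
  (the natural isomorphisms sigma are identities).\<close>
definition lc_defect ::
    "('u, 'k::field) kalg \<Rightarrow> ('u, 'k) kalg \<Rightarrow> ('u, 'k) defect_obj \<Rightarrow> 'u defect_mor \<Rightarrow> bool" where
  "lc_defect A B Dob Dmor \<longleftrightarrow>
     \<comment> \<open>functor to algebras\<close>
     (\<forall>I. cb_obj I \<longrightarrow> is_kalg (Dob I)) \<and>
     (\<forall>I J f. cb_hom I J f \<longrightarrow> kalg_hom (Dob I) (Dob J) (Dmor I J f)) \<and>
     (\<forall>I J f f'. cb_hom I J f \<and> cb_hom I J f' \<and> (\<forall>t\<in>iset I. f t = f' t) \<longrightarrow>
        (\<forall>x\<in>acar (Dob I). Dmor I J f x = Dmor I J f' x)) \<and>
     (\<forall>I. cb_obj I \<longrightarrow> is_identity_on (Dob I) (Dmor I I id)) \<and>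
     (\<forall>I J K f g. cb_hom I J f \<and> cb_hom J K g \<longrightarrow>
        (\<forall>x\<in>acar (Dob I). Dmor I K (g \<circ> f) x = Dmor J K g (Dmor I J f x))) \<and>
     \<comment> \<open>D(I bar) = D(I)^op\<close>
     (\<forall>I. cb_obj I \<longrightarrow> Dob (irev I) = kalg_op (Dob I)) \<and>
     \<comment> \<open>sigma_white, sigma_black are identities: D o Phi_white = A, D o Phi_black = B\<close>
     (\<forall>I. int_obj I \<longrightarrow> Dob (phiW_obj I) = lc_net_obj A I \<and> Dob (phiB_obj I) = lc_net_obj B I) \<and>
     (\<forall>I J f. int_hom I J f \<longrightarrow>
        is_identity_on (Dob (phiW_obj I)) (Dmor (phiW_obj I) (phiW_obj J) (phiW_mor f)) \<and>
        is_identity_on (Dob (phiB_obj I)) (Dmor (phiB_obj I) (phiB_obj J) (phiB_mor f))) \<and>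
     \<comment> \<open>isotony on genuinely bicoloured intervals\<close>
     (\<forall>I J f. cb_hom I J f \<and> is_gen I \<and> is_gen J \<longrightarrow> inj_on (Dmor I J f) (acar (Dob I))) \<and>
     \<comment> \<open>locality\<close>
     (\<forall>I J K. cb_subint I K \<and> cb_subint J K \<and> iint I \<inter> iint J = {} \<longrightarrow>
        (\<forall>x\<in>acar (Dob I). \<forall>y\<in>acar (Dob J).
           amul (Dob K) (Dmor I K id x) (Dmor J K id y) =
           amul (Dob K) (Dmor J K id y) (Dmor I K id x))) \<and>
     \<comment> \<open>strong additivity\<close>
     (\<forall>I J K. cb_subint I K \<and> cb_subint J K \<and> iset K = iset I \<union> iset J \<longrightarrow>
        kalg_generates (Dob K) (Dmor I K id ` acar (Dob I) \<union> Dmor J K id ` acar (Dob J))) \<and>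
     \<comment> \<open>local constancy: orientation-preserving morphisms within INT_white, INT_black,
         INT_gen go to identities\<close>
     (\<forall>I J f. cb_hom I J f \<and> ori I = ori J \<and>
        ((is_white I \<and> is_white J) \<or> (is_black I \<and> is_black J) \<or> (is_gen I \<and> is_gen J)) \<longrightarrow>
        Dob J = Dob I \<and> is_identity_on (Dob I) (Dmor I J f)) \<and>
     \<comment> \<open>constant on morphisms white -> gen and on morphisms black -> gen\<close>
     (\<forall>I J f I' J' f'. cb_hom I J f \<and> cb_hom I' J' f' \<and> is_white I \<and> is_white I' \<and>
        is_gen J \<and> is_gen J' \<longrightarrow> (\<forall>x\<in>acar (Dob I). Dmor I J f x = Dmor I' J' f' x)) \<and>
     (\<forall>I J f I' J' f'. cb_hom I J f \<and> cb_hom I' J' f' \<and> is_black I \<and> is_black I' \<and>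
        is_gen J \<and> is_gen J' \<longrightarrow> (\<forall>x\<in>acar (Dob I). Dmor I J f x = Dmor I' J' f' x))"

definition I0 :: ointv where "I0 = (pi/4, 3*pi/4, True)"
definition W0 :: ointv where "W0 = (5*pi/8, 3*pi/4, True)"
definition B0 :: ointv where "B0 = (pi/4, 3*pi/8, True)"

text \<open>The defect (Dob, Dmor) corresponds to (D, phi): D is its value on genuinely
  bicoloured intervals, and the maps A -> D, B -> D induced by inclusions of white, resp.
  black, intervals are phi restricted to A (x) 1, resp. 1 (x) B.\<close>
definition corresponds ::
    "('u, 'k) kalg \<Rightarrow> ('u, 'k) kalg \<Rightarrow> ('u, 'k) defect_obj \<Rightarrow> 'u defect_mor \<Rightarrow>
     ('u, 'k) kalg \<Rightarrow> ('u \<Rightarrow> 'u \<Rightarrow> 'u) \<Rightarrow> bool" where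
  "corresponds A B Dob Dmor D \<phi> \<longleftrightarrow>
     Dob I0 = D \<and>
     (\<forall>a\<in>acar A. Dmor W0 I0 id a = \<phi> a (aone B)) \<and>
     (\<forall>b\<in>acar B. Dmor B0 I0 id b = \<phi> (aone A) b)"

end

theory Submission
  imports Defs
begin

text \<open>A locally constant defect is determined by the algebra \<open>D\<close> it assigns to one genuinely
  bicoloured interval \<open>I0\<close> together with the two maps \<open>A \<rightarrow> D\<close>, \<open>B \<rightarrow> D\<close> induced by the
  inclusions of a white interval \<open>W0\<close> and a black interval \<open>B0\<close>. Indeed, read in the chart
  \<open>\<theta> \<mapsto> tan (\<theta> - s)\<close>, every morphism between white (black) intervals is the image of a
  morphism of \<open>INT\<close> under \<open>\<Phi>\<^sub>\<circ>\<close> (\<open>\<Phi>\<^sub>\<bullet>\<close>), so it acts as the identity; a morphism between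
  genuinely bicoloured intervals fixes \<open>i\<close>, hence preserves orientation and also acts as the
  identity; and all white-to-bicoloured (black-to-bicoloured) morphisms act by the same map.
  Locality against a bicoloured subinterval of \<open>I0\<close> disjoint from \<open>W0\<close> (from \<open>B0\<close>) makes the
  two maps central, so \<open>\<phi>(a \<otimes> b) = \<iota>\<^sub>A(a) \<iota>\<^sub>B(b)\<close> is an algebra map \<open>A \<otimes> B \<rightarrow> Z(D)\<close>.
  Conversely, for any such \<open>\<phi>\<close> the assignment sending bicoloured intervals to \<open>D\<close>, white
  and black ones to \<open>A\<close> and \<open>B\<close>, and inclusions to \<open>\<phi>\<close> restricted to \<open>A \<otimes> 1\<close> and \<open>1 \<otimes> B\<close>
  is a locally constant defect: its axioms reduce to the centrality of these restrictions.\<close>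

section \<open>Smooth functions of a real variable\<close>

definition smooth_on :: "real set \<Rightarrow> (real \<Rightarrow> real) \<Rightarrow> bool" where
  "smooth_on U g \<longleftrightarrow> (\<forall>n. \<forall>x\<in>U. (deriv ^^ n) g differentiable (at x))"

lemma smooth_on_subset: "smooth_on V g \<Longrightarrow> U \<subseteq> V \<Longrightarrow> smooth_on U g"
  unfolding smooth_on_def by blast

lemma smooth_on_has_higher_deriv:
  assumes "smooth_on U g" "x \<in> U"
  shows "DERIV ((deriv ^^ k) g) x :> (deriv ^^ Suc k) g x"
  using assms DERIV_deriv_iff_real_differentiable unfolding smooth_on_def by simp

lemma smooth_on_continuous_on:
  assumes "smooth_on U g" shows "continuous_on U g"
proof (rule continuous_at_imp_continuous_on, rule ballI)
  fix x assume "x \<in> U"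
  then have "g differentiable (at x)" using assms unfolding smooth_on_def by (metis funpow_0)
  then show "isCont g x" by (rule differentiable_imp_continuous_within)
qed

text \<open>Derivatives need only be known on \<open>U\<close>: as \<open>U\<close> is open, \<open>deriv\<close> only sees values on \<open>U\<close>.\<close>
lemma smooth_on_deriv_closed:
  assumes U: "open U" and closed: "\<And>s. s \<in> S \<Longrightarrow> \<exists>h\<in>S. \<forall>x\<in>U. DERIV s x :> h x"
    and "s \<in> S"
  shows "smooth_on U s"
proof -
  have near: "eventually (\<lambda>y. f y = h y) (nhds x)" if "\<forall>y\<in>U. f y = h y" "x \<in> U"
    for f h :: "real \<Rightarrow> real" and x
    by (rule eventually_mono[OF eventually_nhds_in_open[OF U \<open>x \<in> U\<close>]]) (use that in blast)
  have higher: "\<exists>h\<in>S. \<forall>x\<in>U. (deriv ^^ n) s x = h x" for n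
  proof (induction n)
    case 0 then show ?case using \<open>s \<in> S\<close> by auto
  next
    case (Suc n)
    then obtain h1 where h1: "h1 \<in> S" "\<forall>x\<in>U. (deriv ^^ n) s x = h1 x" by blast
    obtain h2 where h2: "h2 \<in> S" "\<forall>x\<in>U. DERIV h1 x :> h2 x" using closed[OF h1(1)] by blast
    have "(deriv ^^ Suc n) s x = h2 x" if x: "x \<in> U" for x
    proof -
      have "(deriv ^^ Suc n) s x = deriv h1 x" using deriv_cong_ev[OF near[OF h1(2) x] refl] by simp
      also have "\<dots> = h2 x" using h2(2) x by (simp add: DERIV_imp_deriv)
      finally show ?thesis .
    qed
    then show ?case using h2(1) by blast
  qed
  show ?thesis unfolding smooth_on_def
  proof (intro allI ballI)
    fix n x assume x: "x \<in> U"
    obtain h1 where h1: "h1 \<in> S" "\<forall>x\<in>U. (deriv ^^ n) s x = h1 x" using higher by blast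
    obtain h2 where "DERIV h1 x :> h2 x" using closed[OF h1(1)] x by blast
    then have "DERIV ((deriv ^^ n) s) x :> h2 x" using DERIV_cong_ev[OF refl near[OF h1(2) x] refl] by blast
    then show "(deriv ^^ n) s differentiable (at x)" unfolding real_differentiable_def by blast
  qed
qed

inductive_set poly_closure :: "(real \<Rightarrow> real) set \<Rightarrow> (real \<Rightarrow> real) set" for T where
  generator: "t \<in> T \<Longrightarrow> t \<in> poly_closure T"
| const: "(\<lambda>x. c) \<in> poly_closure T"
| add: "a \<in> poly_closure T \<Longrightarrow> b \<in> poly_closure T \<Longrightarrow> (\<lambda>x. a x + b x) \<in> poly_closure T"
| mult: "a \<in> poly_closure T \<Longrightarrow> b \<in> poly_closure T \<Longrightarrow> (\<lambda>x. a x * b x) \<in> poly_closure T"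

lemma poly_closure_deriv_closed:
  assumes gen: "\<And>t. t \<in> T \<Longrightarrow> \<exists>h\<in>poly_closure T. \<forall>x\<in>U. DERIV t x :> h x"
    and "s \<in> poly_closure T"
  shows "\<exists>h\<in>poly_closure T. \<forall>x\<in>U. DERIV s x :> h x"
  using \<open>s \<in> poly_closure T\<close>
proof (induction rule: poly_closure.induct)
  case (generator t)
  then show ?case by (rule gen)
next
  case (const c)
  show ?case by (rule bexI[of _ "\<lambda>x. 0", OF _ poly_closure.const]) simp
next
  case (add a b)
  then obtain ha hb where "ha \<in> poly_closure T" "hb \<in> poly_closure T"
    "\<forall>x\<in>U. DERIV a x :> ha x" "\<forall>x\<in>U. DERIV b x :> hb x" by blast
  then show ?case by (intro bexI[of _ "\<lambda>x. ha x + hb x"] poly_closure.add) (auto intro: DERIV_add)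
next
  case (mult a b)
  then obtain ha hb where "ha \<in> poly_closure T" "hb \<in> poly_closure T"
    "\<forall>x\<in>U. DERIV a x :> ha x" "\<forall>x\<in>U. DERIV b x :> hb x" by blast
  with mult.hyps show ?case
    by (intro bexI[of _ "\<lambda>x. a x * hb x + ha x * b x"] poly_closure.add poly_closure.mult)
      (auto intro: DERIV_mult')
qed

lemma smooth_on_poly_closure:
  assumes "open U" "\<And>t. t \<in> T \<Longrightarrow> \<exists>h\<in>poly_closure T. \<forall>x\<in>U. DERIV t x :> h x"
    and "s \<in> poly_closure T"
  shows "smooth_on U s"
  by (rule smooth_on_deriv_closed[OF assms(1) poly_closure_deriv_closed[OF assms(2)] assms(3)])

text \<open>The derivatives of \<open>g \<circ> f\<close> are polynomials in the derivatives of \<open>f\<close> and in the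
  functions \<open>(deriv ^^ k) g \<circ> f\<close>.\<close>
lemma smooth_on_compose:
  assumes U: "open U" and f: "smooth_on U f" and g: "smooth_on V g" and fUV: "f ` U \<subseteq> V"
  shows "smooth_on U (g \<circ> f)"
proof -
  define T where "T = range (\<lambda>k. (deriv ^^ k) f) \<union> range (\<lambda>k. (deriv ^^ k) g \<circ> f)"
  have f_T: "(deriv ^^ j) f \<in> poly_closure T" for j
    unfolding T_def by (intro poly_closure.generator UnI1 rangeI)
  have g_T: "(deriv ^^ j) g \<circ> f \<in> poly_closure T" for j
    unfolding T_def by (intro poly_closure.generator UnI2 rangeI)
  have "\<exists>h\<in>poly_closure T. \<forall>x\<in>U. DERIV t x :> h x" if "t \<in> T" for t
  proof -
    from that consider k where "t = (deriv ^^ k) f" | k where "t = (deriv ^^ k) g \<circ> f"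
      unfolding T_def by blast
    then show ?thesis
    proof cases
      case 1
      then show ?thesis using smooth_on_has_higher_deriv[OF f] f_T by blast
    next
      case 2
      have "DERIV t x :> ((deriv ^^ Suc k) g \<circ> f) x * (deriv ^^ Suc 0) f x" if x: "x \<in> U" for x
      proof -
        have "f x \<in> V" using fUV x by blast
        moreover have "DERIV f x :> (deriv ^^ Suc 0) f x"
          using smooth_on_has_higher_deriv[OF f x, of 0] by simp
        ultimately show ?thesis
          using DERIV_chain[where g = f, OF smooth_on_has_higher_deriv[OF g]] 2 by simp
      qed
      then show ?thesis by (intro bexI[OF _ poly_closure.mult[OF g_T f_T]]) blast
    qed
  qed
  moreover have "g \<circ> f \<in> poly_closure T" using g_T[of 0] by simp
  ultimately show ?thesis by (rule smooth_on_poly_closure[OF U])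
qed

lemma smooth_on_shift: "smooth_on U (\<lambda>x. x + c)"
proof -
  have id: "(\<lambda>x. x) \<in> poly_closure {\<lambda>x. x}" by (rule poly_closure.generator) simp
  have "\<exists>h\<in>poly_closure {\<lambda>x. x}. \<forall>x\<in>UNIV. DERIV t x :> h x" if "t \<in> {\<lambda>x. x}" for t
  proof -
    have "\<forall>x\<in>UNIV. DERIV t x :> 1" using that by (simp add: DERIV_ident)
    then show ?thesis by (rule bexI[OF _ poly_closure.const])
  qed
  moreover have "(\<lambda>x. x + c) \<in> poly_closure {\<lambda>x. x}" by (rule poly_closure.add[OF id poly_closure.const])
  ultimately have "smooth_on UNIV (\<lambda>x. x + c)" by (rule smooth_on_poly_closure[OF open_UNIV])
  then show ?thesis by (rule smooth_on_subset) simp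
qed

lemma smooth_on_arctan: "smooth_on U arctan"
proof -
  define r :: "real \<Rightarrow> real" where "r x = inverse (1 + x\<^sup>2)" for x
  define T where "T = {arctan, \<lambda>x. x, r}"
  have idT: "(\<lambda>x. x) \<in> poly_closure T" and rT: "r \<in> poly_closure T"
    and arctanT: "arctan \<in> poly_closure T"
    by (auto simp: T_def intro: poly_closure.generator)
  have dr: "DERIV r x :> -2 * x * (r x * r x)" for x
  proof -
    have "1 + x\<^sup>2 \<noteq> 0" using add_pos_nonneg[of 1 "x\<^sup>2"] by simp
    then show ?thesis unfolding r_def
      by (auto intro!: derivative_eq_intros simp: power2_eq_square field_simps)
  qed
  have "\<exists>h\<in>poly_closure T. \<forall>x\<in>UNIV. DERIV t x :> h x" if "t \<in> T" for t
  proof -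
    from that consider "t = arctan" | "t = (\<lambda>x. x)" | "t = r" unfolding T_def by blast
    then show ?thesis
    proof cases
      case 1
      then show ?thesis by (intro bexI[of _ r] rT) (simp add: r_def DERIV_arctan)
    next
      case 2
      then show ?thesis by (intro bexI[of _ "\<lambda>x. 1"] poly_closure.const) simp
    next
      case 3
      have "(\<lambda>x. -2 * x * (r x * r x)) \<in> poly_closure T"
        by (rule poly_closure.mult[OF poly_closure.mult[OF poly_closure.const idT] poly_closure.mult[OF rT rT]])
      then show ?thesis unfolding 3 by (rule bexI[rotated]) (intro ballI dr)
    qed
  qed
  then have "smooth_on UNIV arctan" by (rule smooth_on_poly_closure[OF open_UNIV _ arctanT])
  then show ?thesis by (rule smooth_on_subset) simp
qed

lemma smooth_on_tan:
  assumes "\<forall>x\<in>U. cos x \<noteq> 0"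
  shows "smooth_on U tan"
proof -
  define W :: "real set" where "W = {x. cos x \<noteq> 0}"
  have "continuous_on UNIV (\<lambda>x::real. cos x)" by (intro continuous_intros)
  then have W: "open W" unfolding W_def by (rule open_Collect_neq[OF _ continuous_on_const])
  have tanT: "tan \<in> poly_closure {tan}" by (rule poly_closure.generator) simp
  have "\<exists>h\<in>poly_closure {tan}. \<forall>x\<in>W. DERIV t x :> h x" if "t \<in> {tan}" for t
  proof -
    have "DERIV tan x :> 1 + tan x * tan x" if "x \<in> W" for x
    proof -
      have cos: "cos x \<noteq> 0" using that by (simp add: W_def)
      have "inverse ((cos x)\<^sup>2) = 1 + tan x * tan x"
        using tan_sec[OF cos] by (simp add: power2_eq_square power_inverse)
      then show ?thesis using DERIV_tan[OF cos] by simp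
    qed
    then show ?thesis
      using that by (intro bexI[OF _ poly_closure.add[OF poly_closure.const poly_closure.mult[OF tanT tanT]]]) auto
  qed
  then have "smooth_on W tan" by (rule smooth_on_poly_closure[OF W _ tanT])
  then show ?thesis by (rule smooth_on_subset) (use assms in \<open>auto simp: W_def\<close>)
qed

section \<open>Tangent charts of the circle\<close>

text \<open>The chart \<open>\<theta> \<mapsto> tan (\<theta> - s)\<close> identifies the arc of angles \<open>(s - pi/2, s + pi/2)\<close> with
  the real line; \<open>\<Phi>\<^sub>\<circ>\<close> and \<open>\<Phi>\<^sub>\<bullet>\<close> are its inverses for \<open>s = pi\<close> and \<open>s = 0\<close>.
  \<open>chart_pre s I\<close> and \<open>chart_conj s f\<close> are \<open>I\<close> and \<open>f\<close> read in this chart.\<close>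
definition chart_pre :: "real \<Rightarrow> ointv \<Rightarrow> ointv" where
  "chart_pre s I = (tan (lo I - s), tan (hi I - s), ori I)"

definition chart_conj :: "real \<Rightarrow> (real \<Rightarrow> real) \<Rightarrow> real \<Rightarrow> real" where
  "chart_conj s f = (\<lambda>x. tan (f (arctan x + s) - s))"

lemma ointv_simps [simp]: "lo (a, b, c) = a" "hi (a, b, c) = b" "ori (a, b, c) = c"
  by (simp_all add: lo_def hi_def ori_def)

lemma ointv_collapse: "(lo I, hi I, ori I) = I"
  by (simp add: lo_def hi_def ori_def)

lemma arctan_tan_shift: "s - pi/2 < t \<Longrightarrow> t < s + pi/2 \<Longrightarrow> arctan (tan (t - s)) + s = t"
  using arctan_tan[of "t - s"] by simp

lemma arctan_mem_chart_pre:
  assumes "s - pi/2 < lo I" "lo I \<le> hi I" "hi I < s + pi/2" "x \<in> iset (chart_pre s I)"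
  shows "arctan x + s \<in> iset I"
proof -
  have "arctan (tan (lo I - s)) \<le> arctan x" "arctan x \<le> arctan (tan (hi I - s))"
    using assms(4) by (simp_all add: chart_pre_def iset_def arctan_le_iff)
  moreover have "arctan (tan (lo I - s)) + s = lo I" "arctan (tan (hi I - s)) + s = hi I"
    using assms(1-3) by (simp_all add: arctan_tan_shift)
  ultimately show ?thesis by (simp add: iset_def)
qed

lemma tan_mem_chart_pre:
  assumes "s - pi/2 < lo J" "hi J < s + pi/2" "t \<in> iset J"
  shows "tan (t - s) \<in> iset (chart_pre s J)"
  using assms by (auto simp: chart_pre_def iset_def intro!: tan_mono_le)

lemma int_obj_chart_pre:
  assumes "s - pi/2 < lo I" "hi I < s + pi/2" "lo I < hi I"
  shows "int_obj (chart_pre s I)"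
  using assms by (auto simp: chart_pre_def int_obj_def intro!: tan_monotone)

lemma smooth_on_chart_conj:
  fixes s :: real
  assumes U0: "open U0" and g: "smooth_on U0 g"
  defines "U \<equiv> {x. arctan x + s \<in> U0 \<and> cos (g (arctan x + s) - s) \<noteq> 0}"
  shows "open U" "smooth_on U (chart_conj s g)"
proof -
  define p where "p = (\<lambda>x. arctan x + s)"
  define V where "V = p -` U0"
  have p: "smooth_on UNIV p"
    using smooth_on_compose[OF open_UNIV smooth_on_arctan smooth_on_shift, of UNIV s]
    by (simp add: p_def o_def)
  have V: "open V" unfolding V_def p_def by (rule open_vimage[OF U0]) (intro continuous_intros)
  have q: "smooth_on V (g \<circ> p)"
    using smooth_on_compose[OF V smooth_on_subset[OF p] g] by (auto simp: V_def)
  have "continuous_on UNIV (\<lambda>y. cos (y - s))" by (intro continuous_intros)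
  then have "open {y. cos (y - s) \<noteq> 0}" by (rule open_Collect_neq[OF _ continuous_on_const])
  then have "open ((g \<circ> p) -` {y. cos (y - s) \<noteq> 0} \<inter> V)"
    using continuous_on_open_vimage[OF V] smooth_on_continuous_on[OF q] by blast
  moreover have U_eq: "U = (g \<circ> p) -` {y. cos (y - s) \<noteq> 0} \<inter> V"
    by (auto simp: U_def V_def p_def)
  ultimately show "open U" by simp
  have eq: "tan \<circ> ((\<lambda>y. y + - s) \<circ> (g \<circ> p)) = chart_conj s g"
    by (simp add: fun_eq_iff p_def chart_conj_def)
  have "smooth_on U (g \<circ> p)" using smooth_on_subset[OF q] U_eq by blast
  then have "smooth_on U ((\<lambda>y. y + - s) \<circ> (g \<circ> p))"
    by (rule smooth_on_compose[OF \<open>open U\<close> _ smooth_on_shift[of UNIV]]) simp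
  then have "smooth_on U (tan \<circ> ((\<lambda>y. y + - s) \<circ> (g \<circ> p)))"
    by (rule smooth_on_compose[OF \<open>open U\<close> _ smooth_on_tan[of "{y. cos y \<noteq> 0}"]]) (auto simp: U_def p_def)
  then show "smooth_on U (chart_conj s g)" unfolding eq .
qed

lemma chart_conj_has_deriv:
  assumes g: "DERIV g (arctan x + s) :> d" and cos: "cos (g (arctan x + s) - s) \<noteq> 0"
  shows "DERIV (chart_conj s g) x :> (1 + (chart_conj s g x)\<^sup>2) * d * inverse (1 + x\<^sup>2)"
proof -
  have "DERIV (\<lambda>y. arctan y + s) x :> inverse (1 + x\<^sup>2)"
    using DERIV_add[OF DERIV_arctan DERIV_const] by simp
  from DERIV_chain2[where f = g, OF g this]
  have "DERIV (\<lambda>y. g (arctan y + s) - s) x :> d * inverse (1 + x\<^sup>2)"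
    using DERIV_diff[OF _ DERIV_const] by fastforce
  from DERIV_chain2[OF DERIV_tan[OF cos] this]
  have "DERIV (chart_conj s g) x :> inverse ((cos (g (arctan x + s) - s))\<^sup>2) * (d * inverse (1 + x\<^sup>2))"
    by (simp add: chart_conj_def)
  moreover have "inverse ((cos (g (arctan x + s) - s))\<^sup>2) = 1 + (chart_conj s g x)\<^sup>2"
    using tan_sec[OF cos] by (simp add: chart_conj_def power_inverse)
  ultimately show ?thesis by (simp add: mult.assoc)
qed

lemma deriv_chart_conj_sign:
  assumes "DERIV g (arctan x + s) :> d" and "cos (g (arctan x + s) - s) \<noteq> 0"
  shows "0 < deriv (chart_conj s g) x \<longleftrightarrow> 0 < d" and "deriv (chart_conj s g) x < 0 \<longleftrightarrow> d < 0"
proof -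
  have pos: "0 < (1 + (chart_conj s g x)\<^sup>2) * inverse (1 + x\<^sup>2)"
    by (intro mult_pos_pos) (simp_all add: add_pos_nonneg)
  have "deriv (chart_conj s g) x = (1 + (chart_conj s g x)\<^sup>2) * inverse (1 + x\<^sup>2) * d"
    using DERIV_imp_deriv[OF chart_conj_has_deriv[OF assms]] by (simp add: mult_ac)
  then show "0 < deriv (chart_conj s g) x \<longleftrightarrow> 0 < d" "deriv (chart_conj s g) x < 0 \<longleftrightarrow> d < 0"
    using pos by (auto simp: zero_less_mult_iff mult_less_0_iff)
qed

lemma smooth_emb_chart_conj:
  assumes f: "smooth_emb I J f"
    and I: "s - pi/2 < lo I" "lo I \<le> hi I" "hi I < s + pi/2"
    and J: "s - pi/2 < lo J" "hi J < s + pi/2"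
  shows "smooth_emb (chart_pre s I) (chart_pre s J) (chart_conj s f)"
proof -
  obtain U0 g where U0: "open U0" "iset I \<subseteq> U0" and g: "smooth_on U0 g"
      and gf: "\<forall>x\<in>iset I. g x = f x"
      and sign: "\<forall>x\<in>iset I. if ori I = ori J then deriv g x > 0 else deriv g x < 0"
    using f unfolding smooth_emb_def smooth_on_def by blast
  have fJ: "\<forall>x\<in>iset I. f x \<in> iset J" using f by (simp add: smooth_emb_def)
  define U where "U = {x. arctan x + s \<in> U0 \<and> cos (g (arctan x + s) - s) \<noteq> 0}"
  have arc: "arctan x + s \<in> iset I" if "x \<in> iset (chart_pre s I)" for x
    using arctan_mem_chart_pre[OF I that] .
  have cos: "cos (g (arctan x + s) - s) > 0" if "x \<in> iset (chart_pre s I)" for x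
  proof -
    have "g (arctan x + s) \<in> iset J" using arc[OF that] gf fJ by simp
    then show ?thesis using J by (intro cos_gt_zero_pi) (auto simp: iset_def)
  qed
  have dg: "DERIV g (arctan x + s) :> deriv g (arctan x + s)" if "x \<in> iset (chart_pre s I)" for x
    using smooth_on_has_higher_deriv[OF g, of _ 0] arc[OF that] U0(2) by auto
  show ?thesis
    unfolding smooth_emb_def
  proof (intro conjI exI[of _ U] exI[of _ "chart_conj s g"] ballI)
    show "open U" using smooth_on_chart_conj(1)[OF U0(1) g, of s] by (simp add: U_def)
    show "\<forall>n. \<forall>x\<in>U. (deriv ^^ n) (chart_conj s g) differentiable (at x)"
      using smooth_on_chart_conj(2)[OF U0(1) g, of s] by (simp add: U_def smooth_on_def)
    show "iset (chart_pre s I) \<subseteq> U"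
    proof
      fix x assume x: "x \<in> iset (chart_pre s I)"
      show "x \<in> U" using arc[OF x] cos[OF x] U0(2) unfolding U_def by auto
    qed
  next
    fix x assume x: "x \<in> iset (chart_pre s I)"
    show "chart_conj s g x = chart_conj s f x" using gf arc[OF x] by (simp add: chart_conj_def)
    show "if ori (chart_pre s I) = ori (chart_pre s J) then 0 < deriv (chart_conj s g) x
          else deriv (chart_conj s g) x < 0"
      using bspec[OF sign arc[OF x]] deriv_chart_conj_sign[OF dg[OF x]] cos[OF x]
      by (simp add: chart_pre_def)
    show "chart_conj s f x \<in> iset (chart_pre s J)"
      using tan_mem_chart_pre[OF J] fJ arc[OF x] by (simp add: chart_conj_def)
  qed
qed

lemma int_hom_chart_conj:
  assumes "smooth_emb I J f" "s - pi/2 < lo I" "hi I < s + pi/2" "lo I < hi I"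
    "s - pi/2 < lo J" "hi J < s + pi/2" "lo J < hi J"
  shows "int_hom (chart_pre s I) (chart_pre s J) (chart_conj s f)"
  using smooth_emb_chart_conj[OF assms(1,2) less_imp_le[OF assms(4)] assms(3,5,6)]
    int_obj_chart_pre[OF assms(2,3,4)] int_obj_chart_pre[OF assms(5,6,7)]
  by (simp add: int_hom_def)

section \<open>Bicoloured intervals and their morphisms\<close>

lemma is_white_cb_obj: "is_white I \<Longrightarrow> cb_obj I"
  and is_black_cb_obj: "is_black I \<Longrightarrow> cb_obj I"
  and is_gen_cb_obj: "is_gen I \<Longrightarrow> cb_obj I"
  by (simp_all add: is_white_def is_black_def is_gen_def)

lemma cb_obj_classes: "cb_obj I \<Longrightarrow> is_white I \<or> is_black I \<or> is_gen I"
  unfolding cb_obj_def is_white_def is_black_def is_gen_def by auto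

lemma colour_classes_disjoint:
  "\<not> (is_white I \<and> is_black I)" "\<not> (is_white I \<and> is_gen I)" "\<not> (is_black I \<and> is_gen I)"
  unfolding cb_obj_def is_white_def is_black_def is_gen_def by auto

text \<open>Stated in the form used by the chart lemmas, for \<open>s = pi\<close> and \<open>s = 0\<close>.\<close>
lemma white_window: "is_white I \<Longrightarrow> pi - pi/2 < lo I \<and> hi I < pi + pi/2 \<and> lo I < hi I"
  and black_window: "is_black I \<Longrightarrow> 0 - pi/2 < lo I \<and> hi I < 0 + pi/2 \<and> lo I < hi I"
  by (auto simp: is_white_def is_black_def cb_obj_def)

lemma is_gen_mid: "is_gen I \<Longrightarrow> pi/2 \<in> iset I" "is_gen I \<Longrightarrow> pi/2 \<in> iint I"
  by (auto simp: is_gen_def iset_def iint_def)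

lemma is_gen_of_mid: "cb_obj I \<Longrightarrow> pi/2 \<in> iset I \<Longrightarrow> is_gen I"
  by (auto simp: is_gen_def iset_def cb_obj_def)

lemma phiW_obj_white: "int_obj I \<Longrightarrow> is_white (phiW_obj I)"
  and phiB_obj_black: "int_obj I \<Longrightarrow> is_black (phiB_obj I)"
  unfolding int_obj_def is_white_def is_black_def cb_obj_def phiW_obj_def phiB_obj_def
  using arctan_bounded[of "lo I"] arctan_bounded[of "hi I"] arctan_less_iff[of "lo I" "hi I"]
  by auto

lemma phiW_obj_chart_pre: "is_white I \<Longrightarrow> phiW_obj (chart_pre pi I) = I"
  using white_window[of I] arctan_tan_shift[of pi "lo I"] arctan_tan_shift[of pi "hi I"]
  by (simp add: phiW_obj_def chart_pre_def ointv_collapse)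

lemma phiB_obj_chart_pre: "is_black I \<Longrightarrow> phiB_obj (chart_pre 0 I) = I"
  using black_window[of I] by (simp add: phiB_obj_def chart_pre_def arctan_tan ointv_collapse)

lemma cb_hom_maps:
  assumes "cb_hom I J f" "t \<in> iset I"
  shows "f t \<in> iset J" "colour_of (f t) = colour_of t"
  using assms unfolding cb_hom_def smooth_emb_def by auto

lemma lo_mem_iset: "cb_obj I \<Longrightarrow> lo I \<in> iset I"
  by (simp add: cb_obj_def iset_def)

lemma cb_hom_white_not_black:
  assumes "cb_hom I J f" "is_white I" shows "\<not> is_black J"
  using cb_hom_maps[OF assms(1) lo_mem_iset[OF is_white_cb_obj[OF assms(2)]]] assms(2)
  by (auto simp: is_white_def is_black_def iset_def colour_of_def split: if_splits)

lemma cb_hom_black_not_white: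
  assumes "cb_hom I J f" "is_black I" shows "\<not> is_white J"
  using cb_hom_maps[OF assms(1) lo_mem_iset[OF is_black_cb_obj[OF assms(2)]]] assms(2)
  by (auto simp: is_white_def is_black_def cb_obj_def iset_def colour_of_def split: if_splits)

lemma cb_hom_gen:
  assumes "cb_hom I J f" "is_gen I" shows "f (pi/2) = pi/2" "is_gen J"
proof -
  have "f (pi/2) \<in> iset J" "colour_of (f (pi/2)) = colour_of (pi/2)"
    using cb_hom_maps[OF assms(1) is_gen_mid(1)[OF assms(2)]] by auto
  then show mid: "f (pi/2) = pi/2" by (auto simp: colour_of_def split: if_splits)
  show "is_gen J"
    using assms(1) \<open>f (pi/2) \<in> iset J\<close> mid by (metis cb_hom_def is_gen_of_mid)
qed

text \<open>Such a morphism fixes \<open>i\<close> and maps the black end of \<open>I\<close> to the black side, so it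
  cannot be decreasing.\<close>
lemma cb_hom_gen_ori:
  assumes h: "cb_hom I J f" and gen: "is_gen I" shows "ori I = ori J"
proof (rule ccontr)
  assume ne: "ori I \<noteq> ori J"
  obtain U g where U: "iset I \<subseteq> U" and g: "smooth_on U g" and gf: "\<forall>x\<in>iset I. g x = f x"
      and sign: "\<forall>x\<in>iset I. if ori I = ori J then deriv g x > 0 else deriv g x < 0"
    using h unfolding cb_hom_def smooth_emb_def smooth_on_def by blast
  have mid: "pi/2 \<in> iset I" and lo: "lo I < pi/2" and lo_mem: "lo I \<in> iset I"
    using gen by (auto simp: is_gen_def iset_def)
  have "g (pi/2) < g (lo I)"
  proof (rule DERIV_neg_imp_decreasing[OF lo])
    fix x assume "lo I \<le> x" "x \<le> pi/2"
    then have "x \<in> iset I" using mid by (auto simp: iset_def)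
    then show "\<exists>y. DERIV g x :> y \<and> y < 0"
      using smooth_on_has_higher_deriv[OF g, of x 0] U sign ne by auto
  qed
  moreover have "g (pi/2) = pi/2" using cb_hom_gen(1)[OF h gen] gf mid by simp
  moreover have "colour_of (g (lo I)) = colour_of (lo I)" using cb_hom_maps(2)[OF h lo_mem] gf lo_mem by simp
  then have "g (lo I) < pi/2" using lo by (auto simp: colour_of_def split: if_splits)
  ultimately show False by simp
qed

lemma cb_hom_cases:
  assumes "cb_hom I J f"
  obtains (white) "is_white I" "is_white J" | (white_gen) "is_white I" "is_gen J"
    | (black) "is_black I" "is_black J" | (black_gen) "is_black I" "is_gen J"
    | (gen) "is_gen I" "is_gen J" "ori I = ori J"
  using cb_obj_classes[of I] cb_obj_classes[of J] assms
    cb_hom_white_not_black[OF assms] cb_hom_black_not_white[OF assms]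
    cb_hom_gen(2)[OF assms] cb_hom_gen_ori[OF assms]
  unfolding cb_hom_def by blast

lemma smooth_emb_id:
  assumes "iset I \<subseteq> iset J" "ori I = ori J"
  shows "smooth_emb I J id"
proof -
  have "smooth_on UNIV (\<lambda>x. x)" using smooth_on_shift[of UNIV 0] by simp
  then show ?thesis unfolding smooth_emb_def smooth_on_def using assms
    by (intro conjI exI[of _ UNIV] exI[of _ "\<lambda>x. x"]) auto
qed

lemma cb_subint_hom: "cb_subint I K \<Longrightarrow> cb_hom I K id"
  unfolding cb_subint_def cb_hom_def by (auto intro: smooth_emb_id)

lemma cb_subint_white: "cb_subint I K \<Longrightarrow> is_white K \<Longrightarrow> is_white I"
  and cb_subint_black: "cb_subint I K \<Longrightarrow> is_black K \<Longrightarrow> is_black I"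
  by (auto simp: cb_subint_def is_white_def is_black_def iset_def cb_obj_def)

lemma white_hom_chart_conj:
  assumes h: "cb_hom I J f" and I: "is_white I" and J: "is_white J"
  shows "int_hom (chart_pre pi I) (chart_pre pi J) (chart_conj pi f)"
    and "\<forall>t\<in>iset I. phiW_mor (chart_conj pi f) t = f t"
proof -
  have f: "smooth_emb I J f" using h by (simp add: cb_hom_def)
  show "int_hom (chart_pre pi I) (chart_pre pi J) (chart_conj pi f)"
    using int_hom_chart_conj[OF f] white_window[OF I] white_window[OF J] by simp
  show "\<forall>t\<in>iset I. phiW_mor (chart_conj pi f) t = f t"
  proof
    fix t assume t: "t \<in> iset I"
    have "arctan (tan (t - pi)) + pi = t"
      using t white_window[OF I] by (intro arctan_tan_shift) (auto simp: iset_def)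
    moreover have "arctan (tan (f t - pi)) + pi = f t"
      using cb_hom_maps(1)[OF h t] white_window[OF J] by (intro arctan_tan_shift) (auto simp: iset_def)
    ultimately show "phiW_mor (chart_conj pi f) t = f t" by (simp add: phiW_mor_def chart_conj_def)
  qed
qed

lemma black_hom_chart_conj:
  assumes h: "cb_hom I J f" and I: "is_black I" and J: "is_black J"
  shows "int_hom (chart_pre 0 I) (chart_pre 0 J) (chart_conj 0 f)"
    and "\<forall>t\<in>iset I. phiB_mor (chart_conj 0 f) t = f t"
proof -
  have f: "smooth_emb I J f" using h by (simp add: cb_hom_def)
  show "int_hom (chart_pre 0 I) (chart_pre 0 J) (chart_conj 0 f)"
    using int_hom_chart_conj[OF f] black_window[OF I] black_window[OF J] by simp
  show "\<forall>t\<in>iset I. phiB_mor (chart_conj 0 f) t = f t"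
  proof
    fix t assume t: "t \<in> iset I"
    have "arctan (tan t) = t" using t black_window[OF I] by (intro arctan_tan) (auto simp: iset_def)
    moreover have "arctan (tan (f t)) = f t"
      using cb_hom_maps(1)[OF h t] black_window[OF J] by (intro arctan_tan) (auto simp: iset_def)
    ultimately show "phiB_mor (chart_conj 0 f) t = f t" by (simp add: phiB_mor_def chart_conj_def)
  qed
qed

lemma smooth_emb_cong:
  assumes "smooth_emb I J f" "\<forall>t\<in>iset I. f t = f' t"
  shows "smooth_emb I J f'"
  using assms unfolding smooth_emb_def by simp

lemma cb_hom_cong:
  assumes "cb_hom I J f" "\<forall>t\<in>iset I. f t = f' t"
  shows "cb_hom I J f'"
  using assms smooth_emb_cong[of I J f f'] unfolding cb_hom_def by simp

lemma irev_simps [simp]: "lo (irev I) = lo I" "hi (irev I) = hi I" "ori (irev I) = (\<not> ori I)"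
  by (simp_all add: irev_def)

lemma irev_classes [simp]: "cb_obj (irev I) = cb_obj I" "is_white (irev I) = is_white I"
  "is_black (irev I) = is_black I" "is_gen (irev I) = is_gen I"
  by (simp_all add: cb_obj_def is_white_def is_black_def is_gen_def)

lemma ori_phi_obj [simp]: "ori (phiW_obj I) = ori I" "ori (phiB_obj I) = ori I"
  by (simp_all add: phiW_obj_def phiB_obj_def)

lemma reference_intervals:
  shows I0_gen: "is_gen I0" and I0_ori: "ori I0"
    and W0_white: "is_white W0" and W0_ori: "ori W0" and W0_subint: "cb_subint W0 I0"
    and B0_black: "is_black B0" and B0_ori: "ori B0" and B0_subint: "cb_subint B0 I0"
    and W0_complement: "is_gen (pi/4, 5*pi/8, True)" "cb_subint (pi/4, 5*pi/8, True) I0"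
      "iint W0 \<inter> iint (pi/4, 5*pi/8, True) = {}"
    and B0_complement: "is_gen (3*pi/8, 3*pi/4, True)" "cb_subint (3*pi/8, 3*pi/4, True) I0"
      "iint B0 \<inter> iint (3*pi/8, 3*pi/4, True) = {}"
  using pi_gt_zero by (auto simp: cb_obj_def is_gen_def is_white_def is_black_def cb_subint_def
      iint_def iset_def I0_def W0_def B0_def)

section \<open>Algebras, opposite algebras and central maps out of \<open>A \<otimes> B\<close>\<close>

lemma kalg_op_simps [simp]:
  "acar (kalg_op X) = acar X" "azero (kalg_op X) = azero X" "aone (kalg_op X) = aone X"
  "aadd (kalg_op X) = aadd X" "asmult (kalg_op X) = asmult X" "amul (kalg_op X) x y = amul X y x"
  by (simp_all add: kalg_op_def)

lemma kalg_op_kalg_op [simp]: "kalg_op (kalg_op X) = X"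
  by (simp add: kalg_op_def)

lemma kalgD:
  assumes "is_kalg X"
  shows kalg_one: "aone X \<in> acar X"
    and kalg_mul_closed: "\<And>x y. x \<in> acar X \<Longrightarrow> y \<in> acar X \<Longrightarrow> amul X x y \<in> acar X"
    and kalg_mul_assoc: "\<And>x y z. x \<in> acar X \<Longrightarrow> y \<in> acar X \<Longrightarrow> z \<in> acar X \<Longrightarrow>
        amul X (amul X x y) z = amul X x (amul X y z)"
    and kalg_distrib_left: "\<And>x y z. x \<in> acar X \<Longrightarrow> y \<in> acar X \<Longrightarrow> z \<in> acar X \<Longrightarrow>
        amul X x (aadd X y z) = aadd X (amul X x y) (amul X x z)"
    and kalg_distrib_right: "\<And>x y z. x \<in> acar X \<Longrightarrow> y \<in> acar X \<Longrightarrow> z \<in> acar X \<Longrightarrow>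
        amul X (aadd X x y) z = aadd X (amul X x z) (amul X y z)"
    and kalg_one_left: "\<And>x. x \<in> acar X \<Longrightarrow> amul X (aone X) x = x"
    and kalg_one_right: "\<And>x. x \<in> acar X \<Longrightarrow> amul X x (aone X) = x"
    and kalg_smult_mult_left: "\<And>x y c. x \<in> acar X \<Longrightarrow> y \<in> acar X \<Longrightarrow>
        asmult X c (amul X x y) = amul X (asmult X c x) y"
    and kalg_smult_mult_right: "\<And>x y c. x \<in> acar X \<Longrightarrow> y \<in> acar X \<Longrightarrow>
        asmult X c (amul X x y) = amul X x (asmult X c y)"
  using assms unfolding is_kalg_def by blast+

lemma is_kalg_kalg_op: "is_kalg X \<Longrightarrow> is_kalg (kalg_op X)"
  unfolding is_kalg_def kalg_op_simps
  by (elim conjE, intro conjI) (blast | (intro allI ballI conjI; metis))+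

lemma kalg_hom_id: "kalg_hom X X (\<lambda>x. x)"
  unfolding kalg_hom_def by simp

lemma kalg_hom_op_dom:
  assumes "kalg_hom X Y h" "kalg_comm X" shows "kalg_hom (kalg_op X) Y h"
  using assms unfolding kalg_hom_def kalg_comm_def kalg_op_simps by (elim conjE, intro conjI) simp_all

lemma kalg_hom_op_cod:
  assumes "kalg_hom X Y h" "\<forall>x\<in>acar X. h x \<in> kalg_center Y" shows "kalg_hom X (kalg_op Y) h"
proof -
  note H = assms(1)[unfolded kalg_hom_def]
  show ?thesis unfolding kalg_hom_def kalg_op_simps
  proof (intro conjI ballI allI)
    fix x y assume xy: "x \<in> acar X" "y \<in> acar X"
    have "h (amul X x y) = amul Y (h x) (h y)" using H xy by blast
    also have "\<dots> = amul Y (h y) (h x)" using assms(2) xy H unfolding kalg_center_def by blast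
    finally show "h (amul X x y) = amul Y (h y) (h x)" .
  qed (use H in blast)+
qed

lemma kalg_center_comm: "kalg_comm X \<Longrightarrow> kalg_center X = acar X"
  unfolding kalg_comm_def kalg_center_def by auto

lemma kalg_center_mult_closed:
  assumes X: "is_kalg X" and a: "a \<in> kalg_center X" and b: "b \<in> kalg_center X"
  shows "amul X a b \<in> kalg_center X"
proof -
  have ac: "a \<in> acar X" "\<And>x. x \<in> acar X \<Longrightarrow> amul X a x = amul X x a"
    and bc: "b \<in> acar X" "\<And>x. x \<in> acar X \<Longrightarrow> amul X b x = amul X x b"
    using a b unfolding kalg_center_def by auto
  have "amul X (amul X a b) x = amul X x (amul X a b)" if x: "x \<in> acar X" for x
  proof -
    have "amul X (amul X a b) x = amul X a (amul X x b)"
      using kalg_mul_assoc[OF X ac(1) bc(1) x] bc(2)[OF x] by simp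
    also have "\<dots> = amul X (amul X x a) b"
      using kalg_mul_assoc[OF X ac(1) x bc(1)] ac(2)[OF x] by simp
    also have "\<dots> = amul X x (amul X a b)" using kalg_mul_assoc[OF X x ac(1) bc(1)] .
    finally show ?thesis .
  qed
  then show ?thesis unfolding kalg_center_def using kalg_mul_closed[OF X ac(1) bc(1)] by auto
qed

lemma lc_net_obj_simps [simp]: "acar (lc_net_obj X I) = acar X" "aone (lc_net_obj X I) = aone X"
  by (simp_all add: lc_net_obj_def)

lemma is_kalg_lc_net_obj: "is_kalg X \<Longrightarrow> is_kalg (lc_net_obj X I)"
  by (simp add: lc_net_obj_def is_kalg_kalg_op)

lemma lc_net_obj_irev: "lc_net_obj X (irev I) = kalg_op (lc_net_obj X I)"
  by (simp add: lc_net_obj_def irev_def)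

lemma lc_net_obj_mult_commute:
  "amul X a b = amul X b a \<Longrightarrow> amul (lc_net_obj X I) a b = amul (lc_net_obj X I) b a"
  by (simp add: lc_net_obj_def)

lemma kalg_hom_lc_net_obj:
  assumes "kalg_hom X Y h" "kalg_comm X" "\<forall>x\<in>acar X. h x \<in> kalg_center Y"
  shows "kalg_hom (lc_net_obj X I) (lc_net_obj Y J) h"
  using assms kalg_hom_op_dom kalg_hom_op_cod[of X Y h] kalg_hom_op_cod[of "kalg_op X" Y h]
  unfolding lc_net_obj_def by auto

lemma kalg_hom_lc_net_obj_id:
  "kalg_comm X \<Longrightarrow> kalg_hom (lc_net_obj X I) (lc_net_obj X J) (\<lambda>x. x)"
  using kalg_hom_lc_net_obj[OF kalg_hom_id, of X I J] kalg_center_comm[of X] by simp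

lemma tensor_center_hom_of_central_homs:
  assumes D: "is_kalg D" and hW: "kalg_hom A D W" and hV: "kalg_hom B D V"
    and cW: "\<forall>a\<in>acar A. W a \<in> kalg_center D" and cV: "\<forall>b\<in>acar B. V b \<in> kalg_center D"
  shows "tensor_center_hom A B D (\<lambda>a b. amul D (W a) (V b))"
proof -
  note W = hW[unfolded kalg_hom_def] and V = hV[unfolded kalg_hom_def]
  have Wc: "W a \<in> acar D" if "a \<in> acar A" for a using W that by blast
  have Vc: "V b \<in> acar D" if "b \<in> acar B" for b using V that by blast
  have Wz: "amul D (W a) x = amul D x (W a)" if "a \<in> acar A" "x \<in> acar D" for a x
    using cW that by (auto simp: kalg_center_def)
  show ?thesis unfolding tensor_center_hom_def
  proof (intro conjI ballI allI)
    fix a b assume "a \<in> acar A" "b \<in> acar B"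
    then show "amul D (W a) (V b) \<in> kalg_center D" using kalg_center_mult_closed[OF D] cW cV by blast
  next
    fix a a' b assume "a \<in> acar A" "a' \<in> acar A" "b \<in> acar B"
    then show "amul D (W (aadd A a a')) (V b) = aadd D (amul D (W a) (V b)) (amul D (W a') (V b))"
      using W kalg_distrib_right[OF D Wc Wc Vc] by simp
  next
    fix a b b' assume "a \<in> acar A" "b \<in> acar B" "b' \<in> acar B"
    then show "amul D (W a) (V (aadd B b b')) = aadd D (amul D (W a) (V b)) (amul D (W a) (V b'))"
      using V kalg_distrib_left[OF D Wc Vc Vc] by simp
  next
    fix c a b assume ab: "a \<in> acar A" "b \<in> acar B"
    then show "amul D (W (asmult A c a)) (V b) = asmult D c (amul D (W a) (V b))"
      using W kalg_smult_mult_left[OF D Wc Vc] by simp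
    show "amul D (W a) (V (asmult B c b)) = asmult D c (amul D (W a) (V b))"
      using ab V kalg_smult_mult_right[OF D Wc Vc] by simp
  next
    fix a a' b b' assume ab: "a \<in> acar A" "a' \<in> acar A" "b \<in> acar B" "b' \<in> acar B"
    have "amul D (W (amul A a a')) (V (amul B b b')) = amul D (W a) (amul D (amul D (W a') (V b)) (V b'))"
      using ab W V kalg_mul_assoc[OF D] Wc Vc kalg_mul_closed[OF D] by simp
    also have "\<dots> = amul D (W a) (amul D (amul D (V b) (W a')) (V b'))"
      using Wz[OF ab(2) Vc[OF ab(3)]] by simp
    also have "\<dots> = amul D (amul D (W a) (V b)) (amul D (W a') (V b'))"
      using ab kalg_mul_assoc[OF D] Wc Vc kalg_mul_closed[OF D] by simp
    finally show "amul D (W (amul A a a')) (V (amul B b b')) = amul D (amul D (W a) (V b)) (amul D (W a') (V b'))" .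
  next
    show "amul D (W (aone A)) (V (aone B)) = aone D"
      using W V kalg_one_left[OF D kalg_one[OF D]] by simp
  qed
qed

lemma tensor_center_hom_factor:
  assumes A: "is_kalg A" and B: "is_kalg B" and t: "tensor_center_hom A B D \<phi>"
    and a: "a \<in> acar A" and b: "b \<in> acar B"
  shows "\<phi> a b = amul D (\<phi> a (aone B)) (\<phi> (aone A) b)"
proof -
  have "\<phi> a b = \<phi> (amul A a (aone A)) (amul B (aone B) b)"
    using kalg_one_right[OF A a] kalg_one_left[OF B b] by simp
  also have "\<dots> = amul D (\<phi> a (aone B)) (\<phi> (aone A) b)"
    using t a b kalg_one[OF A] kalg_one[OF B] unfolding tensor_center_hom_def by blast
  finally show ?thesis .
qed

lemma tensor_center_hom_eqI:
  assumes "is_kalg A" "is_kalg B" "tensor_center_hom A B D \<phi>" "tensor_center_hom A B D \<psi>"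
    and "\<forall>a\<in>acar A. \<phi> a (aone B) = \<psi> a (aone B)" "\<forall>b\<in>acar B. \<phi> (aone A) b = \<psi> (aone A) b"
    and "a \<in> acar A" "b \<in> acar B"
  shows "\<phi> a b = \<psi> a b"
  using tensor_center_hom_factor[OF assms(1-3)] tensor_center_hom_factor[OF assms(1,2,4)] assms(5-8)
  by simp

lemma tensor_center_hom_left:
  assumes B: "is_kalg B" and t: "tensor_center_hom A B D \<phi>"
  shows "kalg_hom A D (\<lambda>a. \<phi> a (aone B))" "\<forall>a\<in>acar A. \<phi> a (aone B) \<in> kalg_center D"
proof -
  note T = t[unfolded tensor_center_hom_def]
  have one: "aone B \<in> acar B" "amul B (aone B) (aone B) = aone B"
    using kalg_one[OF B] kalg_one_left[OF B kalg_one[OF B]] by auto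
  show "\<forall>a\<in>acar A. \<phi> a (aone B) \<in> kalg_center D" using T one by blast
  then show "kalg_hom A D (\<lambda>a. \<phi> a (aone B))" unfolding kalg_hom_def kalg_center_def
    using T one by (metis (no_types, lifting) mem_Collect_eq)
qed

lemma tensor_center_hom_right:
  assumes A: "is_kalg A" and t: "tensor_center_hom A B D \<phi>"
  shows "kalg_hom B D (\<lambda>b. \<phi> (aone A) b)" "\<forall>b\<in>acar B. \<phi> (aone A) b \<in> kalg_center D"
proof -
  note T = t[unfolded tensor_center_hom_def]
  have one: "aone A \<in> acar A" "amul A (aone A) (aone A) = aone A"
    using kalg_one[OF A] kalg_one_left[OF A kalg_one[OF A]] by auto
  show "\<forall>b\<in>acar B. \<phi> (aone A) b \<in> kalg_center D" using T one by blast
  then show "kalg_hom B D (\<lambda>b. \<phi> (aone A) b)" unfolding kalg_hom_def kalg_center_def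
    using T one by (metis (no_types, lifting) mem_Collect_eq)
qed

section \<open>The defect attached to a central map \<open>A \<otimes> B \<rightarrow> D\<close>\<close>

definition std_defect_obj ::
    "('u, 'k) kalg \<Rightarrow> ('u, 'k) kalg \<Rightarrow> ('u, 'k) kalg \<Rightarrow> ('u, 'k) defect_obj" where
  "std_defect_obj A B D I =
     (if is_white I then lc_net_obj A I else if is_black I then lc_net_obj B I else lc_net_obj D I)"

definition std_defect_mor ::
    "('u, 'k) kalg \<Rightarrow> ('u, 'k) kalg \<Rightarrow> ('u \<Rightarrow> 'u \<Rightarrow> 'u) \<Rightarrow> 'u defect_mor" where
  "std_defect_mor A B \<phi> I J f x =
     (if is_white I \<and> is_gen J then \<phi> x (aone B)
      else if is_black I \<and> is_gen J then \<phi> (aone A) x else x)"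

lemma std_defect_obj_simps:
  "is_white I \<Longrightarrow> std_defect_obj A B D I = lc_net_obj A I"
  "is_black I \<Longrightarrow> std_defect_obj A B D I = lc_net_obj B I"
  "is_gen I \<Longrightarrow> std_defect_obj A B D I = lc_net_obj D I"
  using colour_classes_disjoint[of I] by (auto simp: std_defect_obj_def)

lemma std_defect_mor_simps:
  "is_white I \<Longrightarrow> is_white J \<Longrightarrow> std_defect_mor A B \<phi> I J f = (\<lambda>x. x)"
  "is_white I \<Longrightarrow> is_gen J \<Longrightarrow> std_defect_mor A B \<phi> I J f = (\<lambda>x. \<phi> x (aone B))"
  "is_black I \<Longrightarrow> is_black J \<Longrightarrow> std_defect_mor A B \<phi> I J f = (\<lambda>x. x)"
  "is_black I \<Longrightarrow> is_gen J \<Longrightarrow> std_defect_mor A B \<phi> I J f = (\<lambda>x. \<phi> (aone A) x)"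
  "is_gen I \<Longrightarrow> std_defect_mor A B \<phi> I J f = (\<lambda>x. x)"
  using colour_classes_disjoint[of I] colour_classes_disjoint[of J]
  by (auto simp: std_defect_mor_def fun_eq_iff)

lemma std_defect_obj_irev: "std_defect_obj A B D (irev I) = kalg_op (std_defect_obj A B D I)"
  by (simp add: std_defect_obj_def lc_net_obj_irev)

lemma std_defect_hom:
  assumes A: "is_kalg A" and cA: "kalg_comm A" and B: "is_kalg B" and cB: "kalg_comm B"
    and t: "tensor_center_hom A B D \<phi>" and h: "cb_hom I J f"
  shows "kalg_hom (std_defect_obj A B D I) (std_defect_obj A B D J) (std_defect_mor A B \<phi> I J f)"
  using h
proof (cases rule: cb_hom_cases)
  case white_gen
  then show ?thesis
    using kalg_hom_lc_net_obj[OF tensor_center_hom_left(1)[OF B t] cA tensor_center_hom_left(2)[OF B t]]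
    by (simp add: std_defect_obj_simps std_defect_mor_simps)
next
  case black_gen
  then show ?thesis
    using kalg_hom_lc_net_obj[OF tensor_center_hom_right(1)[OF A t] cB tensor_center_hom_right(2)[OF A t]]
    by (simp add: std_defect_obj_simps std_defect_mor_simps)
next
  case white
  then show ?thesis by (simp add: std_defect_obj_simps std_defect_mor_simps kalg_hom_lc_net_obj_id[OF cA])
next
  case black
  then show ?thesis by (simp add: std_defect_obj_simps std_defect_mor_simps kalg_hom_lc_net_obj_id[OF cB])
next
  case gen
  then have "lc_net_obj D J = lc_net_obj D I" by (simp add: lc_net_obj_def)
  with gen show ?thesis by (simp add: std_defect_obj_simps std_defect_mor_simps kalg_hom_id)
qed

lemma std_defect_mor_comp:
  assumes "cb_hom I J f" "cb_hom J K g"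
  shows "std_defect_mor A B \<phi> I K (g \<circ> f) x = std_defect_mor A B \<phi> J K g (std_defect_mor A B \<phi> I J f x)"
  using assms colour_classes_disjoint[of J]
  by (cases rule: cb_hom_cases[OF assms(1)]; cases rule: cb_hom_cases[OF assms(2)])
    (auto simp: std_defect_mor_simps)

lemma std_defect_mor_into_gen:
  assumes A: "is_kalg A" and B: "is_kalg B" and t: "tensor_center_hom A B D \<phi>"
    and L: "cb_subint L K" and K: "is_gen K" and z: "z \<in> acar (std_defect_obj A B D L)"
  shows "std_defect_mor A B \<phi> L K id z \<in> acar D"
    and "\<not> is_gen L \<Longrightarrow> std_defect_mor A B \<phi> L K id z \<in> kalg_center D"
proof -
  have "cb_obj L" using L by (simp add: cb_subint_def)
  then consider "is_white L" | "is_black L" | "is_gen L" using cb_obj_classes by blast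
  then have "std_defect_mor A B \<phi> L K id z \<in> acar D \<and>
      (\<not> is_gen L \<longrightarrow> std_defect_mor A B \<phi> L K id z \<in> kalg_center D)"
    using K z colour_classes_disjoint[of L]
      tensor_center_hom_left(2)[OF B t] tensor_center_hom_right(2)[OF A t]
    by cases (auto simp: std_defect_obj_simps std_defect_mor_simps kalg_center_def)
  then show "std_defect_mor A B \<phi> L K id z \<in> acar D"
    and "\<not> is_gen L \<Longrightarrow> std_defect_mor A B \<phi> L K id z \<in> kalg_center D" by auto
qed

lemma std_defect_locality:
  assumes cA: "kalg_comm A" and cB: "kalg_comm B" and A: "is_kalg A" and B: "is_kalg B"
    and t: "tensor_center_hom A B D \<phi>"
    and I: "cb_subint I K" and J: "cb_subint J K" and disj: "iint I \<inter> iint J = {}"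
    and x: "x \<in> acar (std_defect_obj A B D I)" and y: "y \<in> acar (std_defect_obj A B D J)"
  shows "amul (std_defect_obj A B D K) (std_defect_mor A B \<phi> I K id x) (std_defect_mor A B \<phi> J K id y)
       = amul (std_defect_obj A B D K) (std_defect_mor A B \<phi> J K id y) (std_defect_mor A B \<phi> I K id x)"
proof -
  have "cb_obj K" using I by (simp add: cb_subint_def)
  then consider "is_white K" | "is_black K" | "is_gen K" using cb_obj_classes by blast
  then show ?thesis
  proof cases
    case 1
    then have "is_white I" "is_white J" using cb_subint_white I J by blast+
    then show ?thesis using 1 x y cA lc_net_obj_mult_commute[of A x y K]
      by (simp add: std_defect_obj_simps std_defect_mor_simps kalg_comm_def)
  next
    case 2
    then have "is_black I" "is_black J" using cb_subint_black I J by blast+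
    then show ?thesis using 2 x y cB lc_net_obj_mult_commute[of B x y K]
      by (simp add: std_defect_obj_simps std_defect_mor_simps kalg_comm_def)
  next
    case 3
    note image = std_defect_mor_into_gen[OF A B t _ 3]
    have "\<not> (is_gen I \<and> is_gen J)" using is_gen_mid(2)[of I] is_gen_mid(2)[of J] disj by blast
    then have "amul D (std_defect_mor A B \<phi> I K id x) (std_defect_mor A B \<phi> J K id y)
             = amul D (std_defect_mor A B \<phi> J K id y) (std_defect_mor A B \<phi> I K id x)"
      using image[OF I x] image[OF J y] unfolding kalg_center_def by auto
    then show ?thesis using 3 lc_net_obj_mult_commute[of D] by (simp add: std_defect_obj_simps)
  qed
qed

lemma std_defect_strong_additivity:
  assumes I: "cb_subint I K" and J: "cb_subint J K" and un: "iset K = iset I \<union> iset J"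
  shows "kalg_generates (std_defect_obj A B D K)
    (std_defect_mor A B \<phi> I K id ` acar (std_defect_obj A B D I) \<union>
     std_defect_mor A B \<phi> J K id ` acar (std_defect_obj A B D J))"
proof -
  have same_class: "acar (std_defect_obj A B D K) \<subseteq> std_defect_mor A B \<phi> L K id ` acar (std_defect_obj A B D L)"
    if "is_white L \<and> is_white K \<or> is_black L \<and> is_black K \<or> is_gen L \<and> is_gen K" for L
    using that by (auto simp: std_defect_obj_simps std_defect_mor_simps)
  have "cb_obj I" "cb_obj J" "cb_obj K" using I J by (simp_all add: cb_subint_def)
  then have "is_white I \<and> is_white K \<or> is_black I \<and> is_black K \<or> is_gen I \<and> is_gen K \<or>
      is_gen J \<and> is_gen K"
    using cb_obj_classes[of K] cb_subint_white[OF I] cb_subint_black[OF I] is_gen_mid(1)[of K] un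
      is_gen_of_mid[of I] is_gen_of_mid[of J] by blast
  then have "acar (std_defect_obj A B D K) \<subseteq>
      std_defect_mor A B \<phi> I K id ` acar (std_defect_obj A B D I) \<union>
      std_defect_mor A B \<phi> J K id ` acar (std_defect_obj A B D J)"
    using same_class[of I] same_class[of J] by blast
  then show ?thesis unfolding kalg_generates_def by blast
qed

lemma lc_defect_std_defect:
  assumes A: "is_kalg A" and cA: "kalg_comm A" and B: "is_kalg B" and cB: "kalg_comm B"
    and D: "is_kalg D" and t: "tensor_center_hom A B D \<phi>"
  shows "lc_defect A B (std_defect_obj A B D) (std_defect_mor A B \<phi>)"
  unfolding lc_defect_def is_identity_on_def
proof (intro conjI allI impI ballI)
  fix I J K :: ointv and f f' g :: "real \<Rightarrow> real" and x
  show "is_kalg (std_defect_obj A B D I)"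
    using A B D by (simp add: std_defect_obj_def is_kalg_lc_net_obj)
  show "kalg_hom (std_defect_obj A B D I) (std_defect_obj A B D J) (std_defect_mor A B \<phi> I J f)"
    if "cb_hom I J f" using std_defect_hom[OF A cA B cB t that] .
  show "std_defect_mor A B \<phi> I J f x = std_defect_mor A B \<phi> I J f' x"
    by (simp add: std_defect_mor_def)
  show "std_defect_mor A B \<phi> I I id x = x"
    by (simp only: std_defect_mor_def colour_classes_disjoint(2,3) if_False)
  show "std_defect_mor A B \<phi> I K (g \<circ> f) x = std_defect_mor A B \<phi> J K g (std_defect_mor A B \<phi> I J f x)"
    if "cb_hom I J f \<and> cb_hom J K g" by (rule std_defect_mor_comp) (use that in simp_all)
  show "std_defect_obj A B D (irev I) = kalg_op (std_defect_obj A B D I)"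
    by (rule std_defect_obj_irev)
  show "std_defect_obj A B D (phiW_obj I) = lc_net_obj A I" if "int_obj I"
    using phiW_obj_white[OF that] by (simp add: std_defect_obj_simps lc_net_obj_def)
  show "std_defect_obj A B D (phiB_obj I) = lc_net_obj B I" if "int_obj I"
    using phiB_obj_black[OF that] by (simp add: std_defect_obj_simps lc_net_obj_def)
  show "std_defect_mor A B \<phi> (phiW_obj I) (phiW_obj J) (phiW_mor f) x = x"
    and "std_defect_mor A B \<phi> (phiB_obj I) (phiB_obj J) (phiB_mor f) x = x" if "int_hom I J f"
    using that phiW_obj_white phiB_obj_black by (simp_all add: int_hom_def std_defect_mor_simps)
  show "inj_on (std_defect_mor A B \<phi> I J f) (acar (std_defect_obj A B D I))"
    if "cb_hom I J f \<and> is_gen I \<and> is_gen J" using that by (simp add: std_defect_mor_simps)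
  show "std_defect_obj A B D J = std_defect_obj A B D I"
    and "std_defect_mor A B \<phi> I J f x = x"
    if "cb_hom I J f \<and> ori I = ori J \<and>
      (is_white I \<and> is_white J \<or> is_black I \<and> is_black J \<or> is_gen I \<and> is_gen J)"
    using that by (auto simp: std_defect_obj_simps std_defect_mor_simps lc_net_obj_def)
qed (simp_all add: std_defect_mor_simps std_defect_strong_additivity,
    (rule std_defect_locality[OF cA cB A B t]; simp))

lemma corresponds_std_defect: "corresponds A B (std_defect_obj A B D) (std_defect_mor A B \<phi>) D \<phi>"
  using I0_gen I0_ori W0_white B0_black
  by (simp add: corresponds_def std_defect_obj_simps std_defect_mor_simps lc_net_obj_def)

section \<open>Locally constant defects are determined by their value on \<open>I0\<close>\<close>

context
  fixes A B :: "('u, 'k::field) kalg" and Dob :: "('u, 'k) defect_obj" and Dmor :: "'u defect_mor"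
  assumes L: "lc_defect A B Dob Dmor"
begin

lemma lc_defect_kalg: "cb_obj I \<Longrightarrow> is_kalg (Dob I)"
  using L unfolding lc_defect_def by meson

lemma lc_defect_hom: "cb_hom I J f \<Longrightarrow> kalg_hom (Dob I) (Dob J) (Dmor I J f)"
  using L unfolding lc_defect_def by meson

lemma lc_defect_cong:
  "cb_hom I J f \<Longrightarrow> cb_hom I J f' \<Longrightarrow> \<forall>t\<in>iset I. f t = f' t \<Longrightarrow> x \<in> acar (Dob I) \<Longrightarrow>
    Dmor I J f x = Dmor I J f' x"
  using L unfolding lc_defect_def by meson

lemma lc_defect_irev: "cb_obj I \<Longrightarrow> Dob (irev I) = kalg_op (Dob I)"
  using L unfolding lc_defect_def by meson

lemma lc_defect_phiW_obj: "int_obj I \<Longrightarrow> Dob (phiW_obj I) = lc_net_obj A I"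
  and lc_defect_phiB_obj: "int_obj I \<Longrightarrow> Dob (phiB_obj I) = lc_net_obj B I"
  using L unfolding lc_defect_def by meson+

lemma lc_defect_phiW_mor:
  "int_hom I J f \<Longrightarrow> x \<in> acar (Dob (phiW_obj I)) \<Longrightarrow> Dmor (phiW_obj I) (phiW_obj J) (phiW_mor f) x = x"
  and lc_defect_phiB_mor:
  "int_hom I J f \<Longrightarrow> x \<in> acar (Dob (phiB_obj I)) \<Longrightarrow> Dmor (phiB_obj I) (phiB_obj J) (phiB_mor f) x = x"
  using L unfolding lc_defect_def is_identity_on_def by meson+

lemma lc_defect_locality:
  "cb_subint I K \<Longrightarrow> cb_subint J K \<Longrightarrow> iint I \<inter> iint J = {} \<Longrightarrow>
    x \<in> acar (Dob I) \<Longrightarrow> y \<in> acar (Dob J) \<Longrightarrow>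
    amul (Dob K) (Dmor I K id x) (Dmor J K id y) = amul (Dob K) (Dmor J K id y) (Dmor I K id x)"
  using L unfolding lc_defect_def by meson

lemma lc_defect_white_gen:
  "cb_hom I J f \<Longrightarrow> cb_hom I' J' f' \<Longrightarrow> is_white I \<Longrightarrow> is_white I' \<Longrightarrow> is_gen J \<Longrightarrow> is_gen J' \<Longrightarrow>
    x \<in> acar (Dob I) \<Longrightarrow> Dmor I J f x = Dmor I' J' f' x"
  and lc_defect_black_gen:
  "cb_hom I J f \<Longrightarrow> cb_hom I' J' f' \<Longrightarrow> is_black I \<Longrightarrow> is_black I' \<Longrightarrow> is_gen J \<Longrightarrow> is_gen J' \<Longrightarrow>
    x \<in> acar (Dob I) \<Longrightarrow> Dmor I J f x = Dmor I' J' f' x"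
  using L unfolding lc_defect_def by meson+

text \<open>The hypothesis \<open>ori I = ori J\<close> of local constancy is automatic here (\<open>cb_hom_gen_ori\<close>).\<close>
lemma lc_defect_gen_hom:
  assumes h: "cb_hom I J f" and I: "is_gen I"
  shows "Dob J = Dob I" "x \<in> acar (Dob I) \<Longrightarrow> Dmor I J f x = x"
  using L h cb_hom_gen_ori[OF h I] I cb_hom_gen(2)[OF h I] unfolding lc_defect_def is_identity_on_def
  by meson+

lemma lc_defect_white_obj:
  assumes I: "is_white I" shows "Dob I = lc_net_obj A I"
proof -
  have "Dob (phiW_obj (chart_pre pi I)) = lc_net_obj A (chart_pre pi I)"
    using lc_defect_phiW_obj int_obj_chart_pre white_window[OF I] by simp
  then show ?thesis using phiW_obj_chart_pre[OF I] by (simp add: lc_net_obj_def chart_pre_def)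
qed

lemma lc_defect_black_obj:
  assumes I: "is_black I" shows "Dob I = lc_net_obj B I"
proof -
  have "Dob (phiB_obj (chart_pre 0 I)) = lc_net_obj B (chart_pre 0 I)"
    using lc_defect_phiB_obj int_obj_chart_pre black_window[OF I] by simp
  then show ?thesis using phiB_obj_chart_pre[OF I] by (simp add: lc_net_obj_def chart_pre_def)
qed

lemma lc_defect_gen_pos_obj:
  assumes I: "is_gen I" "ori I" shows "Dob I = Dob I0"
proof -
  define K where "K = (max (lo I) (pi/4), min (hi I) (3*pi/4), True)"
  have K: "is_gen K" using I pi_gt_zero by (auto simp: K_def is_gen_def cb_obj_def)
  have "cb_subint K I" "cb_subint K I0" using K I I0_gen
    by (auto simp: cb_subint_def K_def iset_def I0_def is_gen_cb_obj)
  then show ?thesis using lc_defect_gen_hom(1)[OF cb_subint_hom K] by metis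
qed

lemma lc_defect_gen_obj:
  assumes I: "is_gen I" shows "Dob I = lc_net_obj (Dob I0) I"
proof (cases "ori I")
  case True
  then show ?thesis using lc_defect_gen_pos_obj[OF I] by (simp add: lc_net_obj_def)
next
  case False
  have "Dob (irev I) = Dob I0" using lc_defect_gen_pos_obj I False by simp
  moreover have "Dob (irev I) = kalg_op (Dob I)" by (rule lc_defect_irev[OF is_gen_cb_obj[OF I]])
  ultimately show ?thesis using False by (metis kalg_op_kalg_op lc_net_obj_def)
qed

lemma lc_defect_subint_central:
  assumes I: "cb_subint I K" and G: "cb_subint G K" "is_gen G"
    and disj: "iint I \<inter> iint G = {}" and x: "x \<in> acar (Dob I)"
  shows "Dmor I K id x \<in> kalg_center (Dob K)"
proof -
  have DK: "Dob K = Dob G" and idG: "\<And>y. y \<in> acar (Dob G) \<Longrightarrow> Dmor G K id y = y"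
    using lc_defect_gen_hom[OF cb_subint_hom[OF G(1)] G(2)] by auto
  have "amul (Dob K) (Dmor I K id x) y = amul (Dob K) y (Dmor I K id x)" if "y \<in> acar (Dob K)" for y
    using lc_defect_locality[OF I G(1) disj x, of y] idG that DK by simp
  moreover have "Dmor I K id x \<in> acar (Dob K)"
    using lc_defect_hom[OF cb_subint_hom[OF I]] x by (simp add: kalg_hom_def)
  ultimately show ?thesis by (simp add: kalg_center_def)
qed

text \<open>Locality against a bicoloured subinterval of \<open>I0\<close> disjoint from \<open>W0\<close> (resp. \<open>B0\<close>)
  makes the images of \<open>A\<close> and \<open>B\<close> central.\<close>
lemma lc_defect_tensor_center_hom_exists:
  assumes A: "is_kalg A" and B: "is_kalg B"
  shows "\<exists>\<phi>. tensor_center_hom A B (Dob I0) \<phi> \<and> corresponds A B Dob Dmor (Dob I0) \<phi>"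
proof -
  define \<phi> where "\<phi> = (\<lambda>a b. amul (Dob I0) (Dmor W0 I0 id a) (Dmor B0 I0 id b))"
  have D: "is_kalg (Dob I0)" using lc_defect_kalg[OF is_gen_cb_obj[OF I0_gen]] .
  have DW: "Dob W0 = A" and DB: "Dob B0 = B"
    using lc_defect_white_obj[OF W0_white] lc_defect_black_obj[OF B0_black] W0_ori B0_ori
    by (simp_all add: lc_net_obj_def)
  have hW: "kalg_hom A (Dob I0) (Dmor W0 I0 id)" and hB: "kalg_hom B (Dob I0) (Dmor B0 I0 id)"
    using lc_defect_hom[OF cb_subint_hom[OF W0_subint]] lc_defect_hom[OF cb_subint_hom[OF B0_subint]]
      DW DB by simp_all
  have "\<forall>a\<in>acar A. Dmor W0 I0 id a \<in> kalg_center (Dob I0)"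
    using lc_defect_subint_central[OF W0_subint W0_complement(2,1,3)] DW by simp
  moreover have "\<forall>b\<in>acar B. Dmor B0 I0 id b \<in> kalg_center (Dob I0)"
    using lc_defect_subint_central[OF B0_subint B0_complement(2,1,3)] DB by simp
  ultimately have "tensor_center_hom A B (Dob I0) \<phi>"
    unfolding \<phi>_def by (rule tensor_center_hom_of_central_homs[OF D hW hB])
  moreover have "corresponds A B Dob Dmor (Dob I0) \<phi>"
    using hW hB kalg_one_right[OF D] kalg_one_left[OF D]
    by (simp add: corresponds_def \<phi>_def kalg_hom_def)
  ultimately show ?thesis by blast
qed

lemma lc_defect_white_hom:
  assumes h: "cb_hom I J f" and I: "is_white I" and J: "is_white J" and x: "x \<in> acar (Dob I)"
  shows "Dmor I J f x = x"
proof -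
  have eq: "\<forall>t\<in>iset I. f t = phiW_mor (chart_conj pi f) t" using white_hom_chart_conj(2)[OF h I J] by simp
  have "Dmor I J f x = Dmor I J (phiW_mor (chart_conj pi f)) x"
    by (rule lc_defect_cong[OF h cb_hom_cong[OF h eq] eq x])
  also have "\<dots> = x"
    using lc_defect_phiW_mor[OF white_hom_chart_conj(1)[OF h I J]] x
      phiW_obj_chart_pre[OF I] phiW_obj_chart_pre[OF J] by simp
  finally show ?thesis .
qed

lemma lc_defect_black_hom:
  assumes h: "cb_hom I J f" and I: "is_black I" and J: "is_black J" and x: "x \<in> acar (Dob I)"
  shows "Dmor I J f x = x"
proof -
  have eq: "\<forall>t\<in>iset I. f t = phiB_mor (chart_conj 0 f) t" using black_hom_chart_conj(2)[OF h I J] by simp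
  have "Dmor I J f x = Dmor I J (phiB_mor (chart_conj 0 f)) x"
    by (rule lc_defect_cong[OF h cb_hom_cong[OF h eq] eq x])
  also have "\<dots> = x"
    using lc_defect_phiB_mor[OF black_hom_chart_conj(1)[OF h I J]] x
      phiB_obj_chart_pre[OF I] phiB_obj_chart_pre[OF J] by simp
  finally show ?thesis .
qed

lemma lc_defect_obj_eq_std:
  assumes I: "cb_obj I"
  shows "Dob I = std_defect_obj A B (Dob I0) I"
  using cb_obj_classes[OF I]
  by (elim disjE) (simp_all add: std_defect_obj_simps lc_defect_white_obj
      lc_defect_black_obj lc_defect_gen_obj)

lemma lc_defect_mor_eq_std:
  assumes c: "corresponds A B Dob Dmor D \<phi>"
    and h: "cb_hom I J f" and x: "x \<in> acar (Dob I)"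
  shows "Dmor I J f x = std_defect_mor A B \<phi> I J f x"
  using h
proof (cases rule: cb_hom_cases)
  case white
  then show ?thesis using lc_defect_white_hom[OF h _ _ x] by (simp add: std_defect_mor_simps)
next
  case white_gen
  have "Dmor I J f x = Dmor W0 I0 id x"
    using lc_defect_white_gen[OF h cb_subint_hom[OF W0_subint] white_gen(1) W0_white white_gen(2) I0_gen x] .
  also have "\<dots> = \<phi> x (aone B)"
    using c x lc_defect_white_obj[OF white_gen(1)] by (simp add: corresponds_def)
  finally show ?thesis using white_gen by (simp add: std_defect_mor_simps)
next
  case black
  then show ?thesis using lc_defect_black_hom[OF h _ _ x] by (simp add: std_defect_mor_simps)
next
  case black_gen
  have "Dmor I J f x = Dmor B0 I0 id x"
    using lc_defect_black_gen[OF h cb_subint_hom[OF B0_subint] black_gen(1) B0_black black_gen(2) I0_gen x] .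
  also have "\<dots> = \<phi> (aone A) x"
    using c x lc_defect_black_obj[OF black_gen(1)] by (simp add: corresponds_def)
  finally show ?thesis using black_gen by (simp add: std_defect_mor_simps)
next
  case gen
  then show ?thesis using lc_defect_gen_hom(2)[OF h gen(1) x] by (simp add: std_defect_mor_simps)
qed

end

lemma lc_defect_determines_tensor_center_hom:
  assumes L: "lc_defect A B Dob Dmor" and A: "is_kalg A" and B: "is_kalg B"
  shows "is_kalg (Dob I0) \<and>
    (\<exists>\<phi>. tensor_center_hom A B (Dob I0) \<phi> \<and> corresponds A B Dob Dmor (Dob I0) \<phi>) \<and>
    (\<forall>\<phi> \<psi>. tensor_center_hom A B (Dob I0) \<phi> \<and> corresponds A B Dob Dmor (Dob I0) \<phi> \<and>
      tensor_center_hom A B (Dob I0) \<psi> \<and> corresponds A B Dob Dmor (Dob I0) \<psi> \<longrightarrow>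
      (\<forall>a\<in>acar A. \<forall>b\<in>acar B. \<phi> a b = \<psi> a b))"
proof (intro conjI allI impI)
  show "is_kalg (Dob I0)" using lc_defect_kalg[OF L is_gen_cb_obj[OF I0_gen]] .
  show "\<exists>\<phi>. tensor_center_hom A B (Dob I0) \<phi> \<and> corresponds A B Dob Dmor (Dob I0) \<phi>"
    by (rule lc_defect_tensor_center_hom_exists[OF L A B])
  fix \<phi> \<psi>
  assume "tensor_center_hom A B (Dob I0) \<phi> \<and> corresponds A B Dob Dmor (Dob I0) \<phi> \<and>
    tensor_center_hom A B (Dob I0) \<psi> \<and> corresponds A B Dob Dmor (Dob I0) \<psi>"
  then have t: "tensor_center_hom A B (Dob I0) \<phi>" "tensor_center_hom A B (Dob I0) \<psi>"
    and "\<forall>a\<in>acar A. \<phi> a (aone B) = \<psi> a (aone B)" "\<forall>b\<in>acar B. \<phi> (aone A) b = \<psi> (aone A) b"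
    unfolding corresponds_def by metis+
  then show "\<forall>a\<in>acar A. \<forall>b\<in>acar B. \<phi> a b = \<psi> a b"
    using tensor_center_hom_eqI[OF A B t] by blast
qed

lemma lc_defect_exists_for_tensor_center_hom:
  assumes "is_kalg A" "kalg_comm A" "is_kalg B" "kalg_comm B"
    and "is_kalg D \<and> tensor_center_hom A B D \<phi>"
  shows "\<exists>Dob Dmor. lc_defect A B Dob Dmor \<and> corresponds A B Dob Dmor D \<phi>"
  using lc_defect_std_defect[OF assms(1-4)] assms(5) corresponds_std_defect by blast

lemma corresponding_lc_defects_agree:
  assumes "lc_defect A B Dob Dmor \<and> lc_defect A B Dob' Dmor' \<and>
    corresponds A B Dob Dmor D \<phi> \<and> corresponds A B Dob' Dmor' D \<phi>"
  shows "(\<forall>I. cb_obj I \<longrightarrow> Dob I = Dob' I) \<and>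
    (\<forall>I J f. cb_hom I J f \<longrightarrow> (\<forall>x\<in>acar (Dob I). Dmor I J f x = Dmor' I J f x))"
proof -
  from assms have L: "lc_defect A B Dob Dmor" and L': "lc_defect A B Dob' Dmor'"
    and c: "corresponds A B Dob Dmor D \<phi>" and c': "corresponds A B Dob' Dmor' D \<phi>" by auto
  have obj: "Dob I = Dob' I" if "cb_obj I" for I
    using lc_defect_obj_eq_std[OF L that] lc_defect_obj_eq_std[OF L' that] c c'
    by (simp add: corresponds_def)
  have "Dmor I J f x = Dmor' I J f x" if h: "cb_hom I J f" and x: "x \<in> acar (Dob I)" for I J f x
  proof -
    have "cb_obj I" using h by (simp add: cb_hom_def)
    then have x': "x \<in> acar (Dob' I)" using obj x by metis
    have "Dmor I J f x = std_defect_mor A B \<phi> I J f x" by (rule lc_defect_mor_eq_std[OF L c h x])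
    also have "\<dots> = Dmor' I J f x" by (rule lc_defect_mor_eq_std[OF L' c' h x', symmetric])
    finally show ?thesis .
  qed
  with obj show ?thesis by blast
qed

theorem mainTheorem2:
  fixes A B :: "('u, 'k::field) kalg"
  assumes "is_kalg A" and "kalg_comm A" and "is_kalg B" and "kalg_comm B"
  shows
    "(\<forall>Dob Dmor. lc_defect A B Dob Dmor \<longrightarrow>
        is_kalg (Dob I0) \<and>
        (\<exists>\<phi>. tensor_center_hom A B (Dob I0) \<phi> \<and> corresponds A B Dob Dmor (Dob I0) \<phi>) \<and>
        (\<forall>\<phi> \<psi>. tensor_center_hom A B (Dob I0) \<phi> \<and> corresponds A B Dob Dmor (Dob I0) \<phi> \<and>
                 tensor_center_hom A B (Dob I0) \<psi> \<and> corresponds A B Dob Dmor (Dob I0) \<psi> \<longrightarrow>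
                 (\<forall>a\<in>acar A. \<forall>b\<in>acar B. \<phi> a b = \<psi> a b)))
     \<and>
     (\<forall>D \<phi>. is_kalg D \<and> tensor_center_hom A B D \<phi> \<longrightarrow>
        (\<exists>Dob Dmor. lc_defect A B Dob Dmor \<and> corresponds A B Dob Dmor D \<phi>))
     \<and>
     (\<forall>Dob Dmor Dob' Dmor' D \<phi>.
        lc_defect A B Dob Dmor \<and> lc_defect A B Dob' Dmor' \<and>
        corresponds A B Dob Dmor D \<phi> \<and> corresponds A B Dob' Dmor' D \<phi> \<longrightarrow>
        (\<forall>I. cb_obj I \<longrightarrow> Dob I = Dob' I) \<and>
        (\<forall>I J f. cb_hom I J f \<longrightarrow> (\<forall>x\<in>acar (Dob I). Dmor I J f x = Dmor' I J f x)))"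
  by (intro conjI; intro allI impI;
      rule lc_defect_determines_tensor_center_hom[OF _ assms(1,3)]
        lc_defect_exists_for_tensor_center_hom[OF assms] corresponding_lc_defects_agree)

end
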